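(* Let $\eta\in(0,1]$, $p\in[1,2)$ with $(1+\eta)/p>1$, and let $A\in C^{p\text{-}\mathrm{var}}_tC^{\eta,\mathrm{loc}}_x$. Suppose that the nonlinear Young differential equation $x_t=\int_0^tA_{\mathrm ds}(x_s)$ admits a semiflow $\Psi$ which is locally $\beta$-Hölder continuous for every $\beta\in(0,1)$. Then for any $0\le S\le T\le1$ and $y\in\mathbb R^d$ there exists a unique solution to the nonlinear Young equation on $[S,T]$ with initial condition $y$, namely $z_t=\Psi_{S\to t}(y)$.
   Context: $C^{\eta,\mathrm{loc}}_x$: locally $\eta$-Hölder functions $\mathbb R^d\to\mathbb R^d$ (with its Fréchet topology of local Hölder seminorms); $C^{p\text{-}\mathrm{var}}_tE$: continuous paths $[0,1]\to E$ of finite $p$-variation. Nonlinear Young integral: for $A\in C^{p\text{-}\mathrm{var}}_tC^{\eta,\mathrm{loc}}_x$ and $x\in C^{\zeta\text{-}\mathrm{var}}_t$ with $1/p+\eta/\zeta>1$, $\int_s^tA_{\mathrm dr}(x_r)=\lim_{\ell\to\infty}\sum_{j=0}^{2^\ell-1}(A_{t_{j+1}}-A_{t_j})(x_{t_j})$, $t_j=s+j2^{-\ell}(t-s)$. A solution on $[S,T]$ with initial condition $y$ is a path $z\in C^{\zeta\text{-}\mathrm{var}}([S,T])$ for some $\zeta$ with $1/p+\eta/\zeta>1$ such that $z_t=y+\int_S^tA_{\mathrm dr}(z_r)$ for all $t\in[S,T]$. A semiflow is a jointly measurable $\Psi:\{0\le s\le t\le1\}\times\mathbb R^d\to\mathbb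 R^d$ such that for all $(s,x)$, $\Psi_{s\to\cdot}(x)\in C^{p\text{-}\mathrm{var}}$ and $\Psi_{s\to t}(x)=x+\int_s^tA_{\mathrm dr}(\Psi_{s\to r}(x))$ for $t\in[s,1]$, and $\Psi_{s\to t}=\Psi_{r\to t}\circ\Psi_{s\to r}$ for $s\le r\le t$; it is locally $\beta$-Hölder if for each $K$ there is $N$ with $|\Psi_{s\to t}(x)-\Psi_{s\to t}(y)|\le N|x-y|^\beta$ for all $s\le t$, $x,y\in B_K$. *)

theory Defs
  imports "HOL-Analysis.Analysis"
begin

definition loc_holder_norm :: "real \<Rightarrow> real \<Rightarrow> ('a::euclidean_space \<Rightarrow> 'a) \<Rightarrow> real" where
  "loc_holder_norm K \<eta> g =
     (SUP x \<in> cball 0 K. norm (g x)) +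
     (SUP xy \<in> {(x, y). x \<in> cball 0 K \<and> y \<in> cball 0 K \<and> x \<noteq> y}.
        norm (g (fst xy) - g (snd xy)) / norm (fst xy - snd xy) powr \<eta>)"

definition loc_holder :: "real \<Rightarrow> ('a::euclidean_space \<Rightarrow> 'a) \<Rightarrow> bool" where
  "loc_holder \<eta> g \<longleftrightarrow> (\<forall>K>0. \<exists>C. \<forall>x\<in>cball 0 K. \<forall>y\<in>cball 0 K.
      norm (g x - g y) \<le> C * norm (x - y) powr \<eta>)"

definition finite_pvar :: "('b \<Rightarrow> 'b \<Rightarrow> real) \<Rightarrow> real \<Rightarrow> real \<Rightarrow> real \<Rightarrow> (real \<Rightarrow> 'b) \<Rightarrow> bool" where
  "finite_pvar \<delta> p a b f \<longleftrightarrow> (\<exists>M. \<forall>(n::nat) (t::nat \<Rightarrow> real).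
      t 0 = a \<and> t n = b \<and> (\<forall>i<n. t i \<le> t (Suc i)) \<longrightarrow>
      (\<Sum>i<n. \<delta> (f (t (Suc i))) (f (t i)) powr p) \<le> M)"

definition pvar_path :: "real \<Rightarrow> real \<Rightarrow> real \<Rightarrow> (real \<Rightarrow> 'a::euclidean_space) \<Rightarrow> bool" where
  "pvar_path p a b x \<longleftrightarrow> continuous_on {a..b} x \<and> finite_pvar dist p a b x"

text \<open>A in C^{p-var}_t C^{eta,loc}_x on [0,1]: values locally eta-Hoelder, continuous and of
  finite p-variation with respect to every local seminorm of the Frechet space.\<close>
definition pvar_field :: "real \<Rightarrow> real \<Rightarrow> (real \<Rightarrow> 'a::euclidean_space \<Rightarrow> 'a) \<Rightarrow> bool" where
  "pvar_field p \<eta> A \<longleftrightarrow>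
     (\<forall>t\<in>{0..1}. loc_holder \<eta> (A t)) \<and>
     (\<forall>K>0. (\<forall>t\<in>{0..1}. ((\<lambda>s. loc_holder_norm K \<eta> (\<lambda>z. A s z - A t z)) \<longlongrightarrow> 0)
                                 (at t within {0..1})) \<and>
            finite_pvar (\<lambda>g h. loc_holder_norm K \<eta> (\<lambda>z. g z - h z)) p 0 1 A)"

definition nyi_sum :: "(real \<Rightarrow> 'a::euclidean_space \<Rightarrow> 'a) \<Rightarrow> (real \<Rightarrow> 'a) \<Rightarrow> real \<Rightarrow> real \<Rightarrow> nat \<Rightarrow> 'a" where
  "nyi_sum A x s t l =
     (\<Sum>j<2^l. let tj = s + real j / 2^l * (t - s); tj' = s + real (Suc j) / 2^l * (t - s)
               in A tj' (x tj) - A tj (x tj))"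

definition has_nyi :: "(real \<Rightarrow> 'a::euclidean_space \<Rightarrow> 'a) \<Rightarrow> (real \<Rightarrow> 'a) \<Rightarrow> real \<Rightarrow> real \<Rightarrow> 'a \<Rightarrow> bool" where
  "has_nyi A x s t I \<longleftrightarrow> nyi_sum A x s t \<longlonglongrightarrow> I"

definition is_nyi_solution :: "real \<Rightarrow> real \<Rightarrow> (real \<Rightarrow> 'a::euclidean_space \<Rightarrow> 'a) \<Rightarrow> real \<Rightarrow> real \<Rightarrow> 'a \<Rightarrow> (real \<Rightarrow> 'a) \<Rightarrow> bool" where
  "is_nyi_solution p \<eta> A S T y z \<longleftrightarrow>
     (\<exists>\<zeta>. \<zeta> \<ge> 1 \<and> 1/p + \<eta>/\<zeta> > 1 \<and> pvar_path \<zeta> S T z \<and>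
          (\<forall>t\<in>{S..T}. has_nyi A z S t (z t - y)))"

definition is_semiflow :: "real \<Rightarrow> (real \<Rightarrow> 'a::euclidean_space \<Rightarrow> 'a) \<Rightarrow> (real \<Rightarrow> real \<Rightarrow> 'a \<Rightarrow> 'a) \<Rightarrow> bool" where
  "is_semiflow p A \<Psi> \<longleftrightarrow>
     (\<lambda>(s, t, x). \<Psi> s t x) \<in> borel_measurable
        (restrict_space borel {(s, t, x). 0 \<le> s \<and> s \<le> t \<and> t \<le> 1}) \<and>
     (\<forall>s\<in>{0..1}. \<forall>x. pvar_path p s 1 (\<lambda>t. \<Psi> s t x) \<and>
         (\<forall>t\<in>{s..1}. has_nyi A (\<lambda>r. \<Psi> s r x) s t (\<Psi> s t x - x))) \<and>
     (\<forall>s r t. 0 \<le> s \<and> s \<le> r \<and> r \<le> t \<and> t \<le> 1 \<longrightarrow> \<Psi> s t = \<Psi> r t \<circ> \<Psi> s r)"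

definition semiflow_loc_holder :: "real \<Rightarrow> (real \<Rightarrow> real \<Rightarrow> 'a::euclidean_space \<Rightarrow> 'a) \<Rightarrow> bool" where
  "semiflow_loc_holder \<beta> \<Psi> \<longleftrightarrow> (\<forall>K. \<exists>N. \<forall>s t. 0 \<le> s \<and> s \<le> t \<and> t \<le> 1 \<longrightarrow>
      (\<forall>x\<in>cball 0 K. \<forall>y\<in>cball 0 K. norm (\<Psi> s t x - \<Psi> s t y) \<le> N * norm (x - y) powr \<beta>))"

end

theory Submission
  imports Defs
begin

(* Existence is immediate: a trajectory of the semiflow solves the equation. Uniqueness is Davie's
   argument. Let z be a solution, split [S,t] into points r_j and telescope

     z_t - \<Psi>_{S\<rightarrow>t}(z_S) = \<Sum>_j \<Psi>_{r_{j+1}\<rightarrow>t}(z_{r_{j+1}}) - \<Psi>_{r_{j+1}\<rightarrow>t}(\<Psi>_{r_j\<rightarrow>r_{j+1}}(z_{r_j})).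

   By the \<beta>-Hoelder continuity of the flow the j-th term is at most N times the \<beta>-th power of the
   local defect z_{r_{j+1}} - \<Psi>_{r_j\<rightarrow>r_{j+1}}(z_{r_j}). Both z and the trajectory of the flow
   through z_{r_j} are within O(\<omega>^\<theta>) of the germ A_{r_j,r_{j+1}}(z_{r_j}) by the sewing lemma, where
   \<omega> is a superadditive control built from the variations of A and z and \<theta> > 1; for the trajectory,
   whose variation is not known in advance, an a priori bound on short intervals expresses it
   through the variation of A. Raising the exponents p and \<zeta> slightly makes \<omega> small on short
   intervals, and choosing \<beta> < 1 with \<beta> \<theta> > 1 makes the telescoping sum o(\<omega>(S,t)). *)

section \<open>Sewing on finite partitions\<close>

text \<open>A finite set P of reals is read as the partition of [Min P, Max P] through its points, and
  partition_sum \<Xi> P is the Riemann-type sum of the germ \<Xi> along it.\<close>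

definition next_point :: "real set \<Rightarrow> real \<Rightarrow> real" where
  "next_point P x = Min {y\<in>P. x < y}"

definition partition_sum :: "(real \<Rightarrow> real \<Rightarrow> 'a::real_normed_vector) \<Rightarrow> real set \<Rightarrow> 'a" where
  "partition_sum \<Xi> P = (\<Sum>x\<in>{x\<in>P. \<exists>y\<in>P. x < y}. \<Xi> x (next_point P x))"

definition consecutive :: "real set \<Rightarrow> real \<Rightarrow> real \<Rightarrow> bool" where
  "consecutive P x y \<longleftrightarrow> x \<in> P \<and> y \<in> P \<and> x < y \<and> (\<forall>z\<in>P. \<not> (x < z \<and> z < y))"

lemma
  assumes "finite P" "y \<in> P" "x < y"
  shows next_point_mem: "next_point P x \<in> P" and next_point_gt: "x < next_point P x"
    and next_point_le: "\<And>z. z \<in> P \<Longrightarrow> x < z \<Longrightarrow> next_point P x \<le> z"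
proof -
  have fin: "finite {y\<in>P. x < y}" and ne: "{y\<in>P. x < y} \<noteq> {}" using assms by auto
  have "next_point P x \<in> {y\<in>P. x < y}" unfolding next_point_def using Min_in[OF fin ne] .
  then show "next_point P x \<in> P" "x < next_point P x" by auto
  show "\<And>z. z \<in> P \<Longrightarrow> x < z \<Longrightarrow> next_point P x \<le> z" unfolding next_point_def using fin by auto
qed

lemma next_point_eqI:
  assumes "finite P" "y \<in> P" "x < y" "\<And>z. z \<in> P \<Longrightarrow> x < z \<Longrightarrow> y \<le> z"
  shows "next_point P x = y"
  using next_point_le[OF assms(1-3) assms(2,3)] assms(4)[OF next_point_mem[OF assms(1-3)] next_point_gt[OF assms(1-3)]]
  by simp

lemma partition_sum_split:
  assumes "finite P" "c \<in> P"
  shows "partition_sum \<Xi> P = partition_sum \<Xi> {x\<in>P. x \<le> c} + partition_sum \<Xi> {x\<in>P. c \<le> x}"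
proof -
  let ?L = "{x\<in>P. x \<le> c}" and ?R = "{x\<in>P. c \<le> x}"
  let ?IL = "{x\<in>?L. \<exists>y\<in>?L. x < y}" and ?IR = "{x\<in>?R. \<exists>y\<in>?R. x < y}"
  have fL: "finite ?L" and fR: "finite ?R" using assms by auto
  have I: "{x\<in>P. \<exists>y\<in>P. x < y} = ?IL \<union> ?IR"
  proof (intro set_eqI iffI)
    fix x assume x: "x \<in> {x\<in>P. \<exists>y\<in>P. x < y}"
    then obtain y where "y \<in> P" "x < y" by auto
    show "x \<in> ?IL \<union> ?IR"
    proof (cases "x < c")
      case True then show ?thesis using x assms by auto
    next
      case False then show ?thesis using x \<open>y \<in> P\<close> \<open>x < y\<close> by auto
    qed
  qed auto
  have next_L: "next_point P x = next_point ?L x" if "x \<in> ?IL" for x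
  proof -
    from that obtain y where y: "y \<in> ?L" "x < y" by auto
    show ?thesis
      using next_point_mem[OF fL y] next_point_gt[OF fL y] next_point_le[OF fL y]
      by (intro next_point_eqI[OF assms(1)]) force+
  qed
  have next_R: "next_point P x = next_point ?R x" if "x \<in> ?IR" for x
  proof -
    from that obtain y where y: "y \<in> ?R" "x < y" by auto
    show ?thesis
      using next_point_mem[OF fR y] next_point_gt[OF fR y] next_point_le[OF fR y] that
      by (intro next_point_eqI[OF assms(1)]) force+
  qed
  have "partition_sum \<Xi> P = (\<Sum>x\<in>?IL. \<Xi> x (next_point P x)) + (\<Sum>x\<in>?IR. \<Xi> x (next_point P x))"
    unfolding partition_sum_def I using assms(1) by (intro sum.union_disjoint) auto
  also have "\<dots> = partition_sum \<Xi> ?L + partition_sum \<Xi> ?R"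
    unfolding partition_sum_def using next_L next_R by (intro arg_cong2[where f = "(+)"] sum.cong) auto
  finally show ?thesis .
qed

lemma partition_sum_singleton: "partition_sum \<Xi> {x} = 0"
proof -
  have "{z\<in>{x}. \<exists>y\<in>{x}. z < y} = {}" by auto
  then show ?thesis unfolding partition_sum_def by (metis sum.empty)
qed

lemma partition_sum_pair:
  assumes "x < y" shows "partition_sum \<Xi> {x, y} = \<Xi> x y"
proof -
  have "{z\<in>{x,y}. \<exists>w\<in>{x,y}. z < w} = {x}" using assms by auto
  moreover have "next_point {x,y} x = y" by (rule next_point_eqI) (use assms in auto)
  ultimately show ?thesis unfolding partition_sum_def by simp
qed

lemma partition_sum_split_step:
  assumes "finite P" "c \<in> P" "y \<in> P" "c < y"
  shows "partition_sum \<Xi> P =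
    partition_sum \<Xi> {x\<in>P. x \<le> c} + \<Xi> c (next_point P c) + partition_sum \<Xi> {x\<in>P. next_point P c \<le> x}"
proof -
  define c' where "c' = next_point P c"
  have c': "c' \<in> P" "c < c'" "\<And>z. z \<in> P \<Longrightarrow> c < z \<Longrightarrow> c' \<le> z"
    using next_point_mem[OF assms(1,3,4)] next_point_gt[OF assms(1,3,4)] next_point_le[OF assms(1,3,4)]
    unfolding c'_def by auto
  let ?R = "{x\<in>P. c \<le> x}"
  have "{x\<in>?R. x \<le> c'} = {c, c'}" using assms(2) c' by force
  moreover have "{x\<in>?R. c' \<le> x} = {x\<in>P. c' \<le> x}" using c' by auto
  ultimately have "partition_sum \<Xi> ?R = \<Xi> c c' + partition_sum \<Xi> {x\<in>P. c' \<le> x}"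
    using partition_sum_split[of ?R c' \<Xi>] partition_sum_pair[OF c'(2)] assms(1) c' by auto
  then show ?thesis
    using partition_sum_split[OF assms(1,2), of \<Xi>] unfolding c'_def by (simp add: add.assoc)
qed

lemma consecutive_lower:
  "consecutive {x\<in>P. x \<le> c} x y \<Longrightarrow> consecutive P x y"
  unfolding consecutive_def by force

lemma consecutive_upper:
  "consecutive {x\<in>P. c \<le> x} x y \<Longrightarrow> consecutive P x y"
  unfolding consecutive_def by force

lemma powr_eq_powr_minus_one_mult:
  fixes x :: real
  assumes "0 \<le> x"
  shows "x powr \<theta> = x powr (\<theta> - 1) * x"
proof -
  have "x powr \<theta> = x powr ((\<theta> - 1) + 1)" by simp
  also have "\<dots> = x powr (\<theta> - 1) * x powr 1" by (rule powr_add)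
  also have "x powr 1 = x" using assms by simp
  finally show ?thesis .
qed

text \<open>The constant is the fixed point of C \<mapsto> 2 C (1/2)^\<theta> + 2, which is what closes the
  induction in partition_sum_approx.\<close>

definition sewing_const :: "real \<Rightarrow> real" where
  "sewing_const \<theta> = 2 / (1 - 2 powr (1 - \<theta>))"

lemma
  assumes "\<theta> > 1"
  shows sewing_const_pos: "sewing_const \<theta> > 0"
    and sewing_const_fixed_point: "sewing_const \<theta> * 2 powr (1 - \<theta>) + 2 = sewing_const \<theta>"
proof -
  have "2 powr (1 - \<theta>) < 2 powr 0" using assms by (intro powr_less_mono) auto
  then have h: "2 powr (1 - \<theta>) < 1" by simp
  then show "sewing_const \<theta> > 0" unfolding sewing_const_def by simp
  have "1 - 2 powr (1 - \<theta>) \<noteq> 0" using h by linarith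
  then show "sewing_const \<theta> * 2 powr (1 - \<theta>) + 2 = sewing_const \<theta>"
    unfolding sewing_const_def by (simp add: field_simps)
qed

locale sewing =
  fixes \<Xi> :: "real \<Rightarrow> real \<Rightarrow> 'a::real_normed_vector" and \<omega> :: "real \<Rightarrow> real \<Rightarrow> real"
    and a b \<theta> :: real
  assumes exponent_gt_1: "\<theta> > 1"
    and control_nonneg: "\<And>u v. a \<le> u \<Longrightarrow> u \<le> v \<Longrightarrow> v \<le> b \<Longrightarrow> 0 \<le> \<omega> u v"
    and control_superadditive:
      "\<And>u m v. a \<le> u \<Longrightarrow> u \<le> m \<Longrightarrow> m \<le> v \<Longrightarrow> v \<le> b \<Longrightarrow> \<omega> u m + \<omega> m v \<le> \<omega> u v"
    and germ_defect: "\<And>u m v. a \<le> u \<Longrightarrow> u \<le> m \<Longrightarrow> m \<le> v \<Longrightarrow> v \<le> b \<Longrightarrow>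
        norm (\<Xi> u v - \<Xi> u m - \<Xi> m v) \<le> \<omega> u v powr \<theta>"
begin

lemma control_diag: "a \<le> u \<Longrightarrow> u \<le> b \<Longrightarrow> \<omega> u u = 0"
  using control_superadditive[of u u u] control_nonneg[of u u] by auto

lemma control_mono:
  "a \<le> u \<Longrightarrow> u \<le> u' \<Longrightarrow> u' \<le> v' \<Longrightarrow> v' \<le> v \<Longrightarrow> v \<le> b \<Longrightarrow> \<omega> u' v' \<le> \<omega> u v"
  using control_superadditive[of u u' v] control_superadditive[of u' v' v]
    control_nonneg[of u u'] control_nonneg[of v' v] by linarith

lemma germ_diag: "a \<le> u \<Longrightarrow> u \<le> b \<Longrightarrow> \<Xi> u u = 0"
  using germ_defect[of u u u] control_diag[of u] exponent_gt_1 by auto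

lemma balanced_split_point:
  assumes fin: "finite P" and sub: "P \<subseteq> {u..v}" and uP: "u \<in> P" and vP: "v \<in> P"
    and ab: "a \<le> u" "v \<le> b" and uv: "u < v"
  obtains c where "c \<in> P" "u \<le> c" "c < v"
    "\<omega> u c \<le> \<omega> u v / 2" "\<omega> (next_point P c) v \<le> \<omega> u v / 2"
proof -
  define Q where "Q = {x\<in>P - {v}. \<omega> u x \<le> \<omega> u v / 2}"
  have W_nn: "0 \<le> \<omega> u v" using control_nonneg ab uv by simp
  have finQ: "finite Q" unfolding Q_def using fin by auto
  have uQ: "u \<in> Q" unfolding Q_def using uP uv control_diag[of u] ab W_nn by auto
  define c where "c = Max Q"
  have "c \<in> Q" unfolding c_def using Max_in[OF finQ] uQ by auto
  then have cP: "c \<in> P" and cv: "c < v" and cW: "\<omega> u c \<le> \<omega> u v / 2"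
    using sub unfolding Q_def by auto
  have uc: "u \<le> c" unfolding c_def using Max_ge[OF finQ uQ] .
  define c' where "c' = next_point P c"
  have c': "c' \<in> P" "c < c'" using next_point_mem[OF fin vP cv] next_point_gt[OF fin vP cv] next_point_le[OF fin vP cv] unfolding c'_def by auto
  have c'v: "c' \<le> v" using c' sub by auto
  have "\<omega> c' v \<le> \<omega> u v / 2"
  proof (cases "c' = v")
    case True then show ?thesis using control_diag[of v] ab uv W_nn by simp
  next
    case False
    then have "c' \<notin> Q" using c' Max_ge[OF finQ, of c'] unfolding c_def by force
    then have "\<omega> u c' > \<omega> u v / 2" unfolding Q_def using c' False by auto
    moreover have "\<omega> u c' + \<omega> c' v \<le> \<omega> u v"
      using control_superadditive[of u c' v] ab uc c' c'v by simp
    ultimately show ?thesis by simp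
  qed
  then show ?thesis using that cP uc cv cW unfolding c'_def by blast
qed

lemma partition_sum_approx:
  "finite P \<Longrightarrow> P \<subseteq> {u..v} \<Longrightarrow> u \<in> P \<Longrightarrow> v \<in> P \<Longrightarrow> a \<le> u \<Longrightarrow> v \<le> b \<Longrightarrow>
    norm (partition_sum \<Xi> P - \<Xi> u v) \<le> sewing_const \<theta> * \<omega> u v powr \<theta>"
proof (induction "card P" arbitrary: P u v rule: less_induct)
  case less
  note fin = less.prems(1) and sub = less.prems(2) and uP = less.prems(3) and vP = less.prems(4)
    and ab = less.prems(5,6)
  have C: "sewing_const \<theta> > 0" "sewing_const \<theta> * 2 powr (1 - \<theta>) + 2 = sewing_const \<theta>"
    using sewing_const_pos[OF exponent_gt_1] sewing_const_fixed_point[OF exponent_gt_1] by auto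
  show ?case
  proof (cases "u = v")
    case True
    then have "P = {u}" using sub uP by auto
    then show ?thesis using True germ_diag[of u] ab C by (simp add: partition_sum_singleton)
  next
    case False
    then have uv: "u < v" using sub uP by force
    define W where "W = \<omega> u v"
    have W_nn: "0 \<le> W" unfolding W_def using control_nonneg ab uv by simp
    obtain c where cP: "c \<in> P" and c: "u \<le> c" "c < v"
      and half: "\<omega> u c \<le> W / 2" "\<omega> (next_point P c) v \<le> W / 2"
      using balanced_split_point[OF fin sub uP vP ab uv] unfolding W_def by blast
    define c' where "c' = next_point P c"
    have c': "c' \<in> P" "c < c'" using next_point_mem[OF fin vP c(2)] next_point_gt[OF fin vP c(2)] next_point_le[OF fin vP c(2)] unfolding c'_def by auto
    have c'v: "c' \<le> v" using c' sub by auto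
    define P1 where "P1 = {x\<in>P. x \<le> c}"
    define P3 where "P3 = {x\<in>P. c' \<le> x}"
    have card1: "card P1 < card P"
      using vP c fin unfolding P1_def by (intro psubset_card_mono) force+
    have card3: "card P3 < card P"
      using uP c c' fin unfolding P3_def by (intro psubset_card_mono) force+
    have s1: "P1 \<subseteq> {u..c}" "P3 \<subseteq> {c'..v}" using sub unfolding P1_def P3_def by auto
    have IH1: "norm (partition_sum \<Xi> P1 - \<Xi> u c) \<le> sewing_const \<theta> * \<omega> u c powr \<theta>"
      using less.hyps[OF card1 _ s1(1)] fin uP cP c ab unfolding P1_def by auto
    have IH3: "norm (partition_sum \<Xi> P3 - \<Xi> c' v) \<le> sewing_const \<theta> * \<omega> c' v powr \<theta>"
      using less.hyps[OF card3 _ s1(2)] fin vP c'(1) c' c c'v ab unfolding P3_def by auto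
    have p1: "\<omega> u c powr \<theta> \<le> (W/2) powr \<theta>" and p3: "\<omega> c' v powr \<theta> \<le> (W/2) powr \<theta>"
      using half control_nonneg[of u c] control_nonneg[of c' v] ab c c' c'v exponent_gt_1
      unfolding c'_def by (auto intro!: powr_mono2)
    have d1: "norm (\<Xi> u v - \<Xi> u c - \<Xi> c v) \<le> W powr \<theta>"
      unfolding W_def using germ_defect[of u c v] ab c by simp
    have "norm (\<Xi> c v - \<Xi> c c' - \<Xi> c' v) \<le> \<omega> c v powr \<theta>"
      using germ_defect[of c c' v] ab c c' c'v by simp
    also have "\<dots> \<le> W powr \<theta>" unfolding W_def
      using control_mono[of u c v v] control_nonneg[of c v] ab c exponent_gt_1 by (intro powr_mono2) auto
    finally have d2: "norm (\<Xi> c v - \<Xi> c c' - \<Xi> c' v) \<le> W powr \<theta>" .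
    define A1 where "A1 = partition_sum \<Xi> P1 - \<Xi> u c"
    define A3 where "A3 = partition_sum \<Xi> P3 - \<Xi> c' v"
    define D1 where "D1 = \<Xi> u v - \<Xi> u c - \<Xi> c v"
    define D2 where "D2 = \<Xi> c v - \<Xi> c c' - \<Xi> c' v"
    have "partition_sum \<Xi> P - \<Xi> u v = A1 + A3 - D1 - D2"
      unfolding partition_sum_split_step[OF fin cP vP c(2)] P1_def P3_def c'_def A1_def A3_def D1_def D2_def
      by (simp add: algebra_simps)
    then have "norm (partition_sum \<Xi> P - \<Xi> u v) \<le> norm A1 + norm A3 + norm D1 + norm D2"
      unfolding \<open>partition_sum \<Xi> P - \<Xi> u v = A1 + A3 - D1 - D2\<close> using norm_triangle_ineq[of A1 A3] norm_triangle_ineq4[of "A1 + A3" D1]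
        norm_triangle_ineq4[of "A1 + A3 - D1" D2] by linarith
    also have "\<dots> \<le> sewing_const \<theta> * (W/2) powr \<theta> + sewing_const \<theta> * (W/2) powr \<theta> + W powr \<theta> + W powr \<theta>"
      using IH1 IH3 d1 d2 mult_left_mono[OF p1, of "sewing_const \<theta>"] mult_left_mono[OF p3, of "sewing_const \<theta>"] C(1)
      unfolding A1_def A3_def D1_def D2_def by linarith
    also have "\<dots> = (sewing_const \<theta> * 2 powr (1 - \<theta>) + 2) * W powr \<theta>"
      using W_nn by (simp add: powr_divide powr_diff field_simps)
    also have "\<dots> = sewing_const \<theta> * \<omega> u v powr \<theta>" using C unfolding W_def by simp
    finally show ?thesis .
  qed
qed

lemma partition_sum_refine:
  "finite Q \<Longrightarrow> P \<subseteq> Q \<Longrightarrow> Q \<subseteq> {u..v} \<Longrightarrow> u \<in> P \<Longrightarrow> v \<in> P \<Longrightarrow> a \<le> u \<Longrightarrow> v \<le> b \<Longrightarrow> 0 \<le> \<delta> \<Longrightarrow>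
   (\<And>x y. consecutive P x y \<Longrightarrow> \<omega> x y \<le> \<delta>) \<Longrightarrow>
   norm (partition_sum \<Xi> Q - partition_sum \<Xi> P) \<le> sewing_const \<theta> * \<delta> powr (\<theta> - 1) * \<omega> u v"
proof (induction "card P" arbitrary: P Q u v rule: less_induct)
  case less
  note finQ = less.prems(1) and PQ = less.prems(2) and sub = less.prems(3) and uP = less.prems(4)
    and vP = less.prems(5) and ab = less.prems(6,7) and d0 = less.prems(8) and cons = less.prems(9)
  have fin: "finite P" using finQ PQ finite_subset by blast
  have uv: "u \<le> v" using sub PQ uP by auto
  have om0: "0 \<le> \<omega> u v" using control_nonneg ab uv by simp
  have C: "sewing_const \<theta> > 0" using sewing_const_pos[OF exponent_gt_1] sewing_const_fixed_point[OF exponent_gt_1] by auto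
  show ?case
  proof (cases "\<exists>z\<in>P. u < z \<and> z < v")
    case False
    show ?thesis
    proof (cases "u = v")
      case True
      then have "P = {u}" "Q = {u}" using sub PQ uP by auto
      then show ?thesis using C om0 d0 by simp
    next
      case uv': False
      then have Pe: "P = {u, v}" using sub PQ uP vP False by force
      have "consecutive P u v" unfolding consecutive_def Pe using uv uv' by auto
      then have omd: "\<omega> u v \<le> \<delta>" using cons by auto
      have "norm (partition_sum \<Xi> Q - partition_sum \<Xi> P) = norm (partition_sum \<Xi> Q - \<Xi> u v)"
        unfolding Pe using partition_sum_pair[of u v \<Xi>] uv uv' by simp
      also have "\<dots> \<le> sewing_const \<theta> * \<omega> u v powr \<theta>"
        by (rule partition_sum_approx) (use finQ sub PQ uP vP ab in auto)
      also have "\<dots> = sewing_const \<theta> * \<omega> u v powr (\<theta> - 1) * \<omega> u v"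
        using powr_eq_powr_minus_one_mult[OF om0, of \<theta>] by (simp add: mult.assoc)
      also have "\<dots> \<le> sewing_const \<theta> * \<delta> powr (\<theta> - 1) * \<omega> u v"
        using omd om0 exponent_gt_1 C by (intro mult_right_mono mult_left_mono powr_mono2) auto
      finally show ?thesis .
    qed
  next
    case True
    then obtain c where cP: "c \<in> P" and c: "u < c" "c < v" by auto
    have cQ: "c \<in> Q" using cP PQ by auto
    have card1: "card {x\<in>P. x \<le> c} < card P"
      using vP c fin by (intro psubset_card_mono) force+
    have card2: "card {x\<in>P. c \<le> x} < card P"
      using uP c fin by (intro psubset_card_mono) force+
    have IH1: "norm (partition_sum \<Xi> {x\<in>Q. x \<le> c} - partition_sum \<Xi> {x\<in>P. x \<le> c})
        \<le> sewing_const \<theta> * \<delta> powr (\<theta> - 1) * \<omega> u c"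
      by (rule less.hyps[OF card1]) (use PQ sub finQ uP cP c ab d0 cons consecutive_lower in auto)
    have IH2: "norm (partition_sum \<Xi> {x\<in>Q. c \<le> x} - partition_sum \<Xi> {x\<in>P. c \<le> x})
        \<le> sewing_const \<theta> * \<delta> powr (\<theta> - 1) * \<omega> c v"
      by (rule less.hyps[OF card2]) (use PQ sub finQ vP cP c ab d0 cons consecutive_upper in auto)
    have eq: "partition_sum \<Xi> Q - partition_sum \<Xi> P =
        (partition_sum \<Xi> {x\<in>Q. x \<le> c} - partition_sum \<Xi> {x\<in>P. x \<le> c})
        + (partition_sum \<Xi> {x\<in>Q. c \<le> x} - partition_sum \<Xi> {x\<in>P. c \<le> x})"
      unfolding partition_sum_split[OF fin cP] partition_sum_split[OF finQ cQ] by (simp add: algebra_simps)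
    have "norm (partition_sum \<Xi> Q - partition_sum \<Xi> P)
        \<le> norm (partition_sum \<Xi> {x\<in>Q. x \<le> c} - partition_sum \<Xi> {x\<in>P. x \<le> c})
          + norm (partition_sum \<Xi> {x\<in>Q. c \<le> x} - partition_sum \<Xi> {x\<in>P. c \<le> x})"
      unfolding eq by (rule norm_triangle_ineq)
    also have "\<dots> \<le> sewing_const \<theta> * \<delta> powr (\<theta> - 1) * \<omega> u c + sewing_const \<theta> * \<delta> powr (\<theta> - 1) * \<omega> c v"
      using IH1 IH2 by (rule add_mono)
    also have "\<dots> = sewing_const \<theta> * \<delta> powr (\<theta> - 1) * (\<omega> u c + \<omega> c v)"
      by (simp add: distrib_left)
    also have "\<dots> \<le> sewing_const \<theta> * \<delta> powr (\<theta> - 1) * \<omega> u v"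
      using control_superadditive[of u c v] ab c C by (intro mult_left_mono) auto
    finally show ?thesis .
  qed
qed

end

section \<open>Dyadic partitions and the sewing lemma\<close>

definition dyadic_point :: "real \<Rightarrow> real \<Rightarrow> nat \<Rightarrow> nat \<Rightarrow> real" where
  "dyadic_point s t l j = s + real j / 2^l * (t - s)"

definition dyadic_partition :: "real \<Rightarrow> real \<Rightarrow> nat \<Rightarrow> real set" where
  "dyadic_partition s t l = dyadic_point s t l ` {..2^l}"

lemma dyadic_point_strict_mono: "s < t \<Longrightarrow> i < j \<Longrightarrow> dyadic_point s t l i < dyadic_point s t l j"
  unfolding dyadic_point_def by (simp add: divide_strict_right_mono)

lemma dyadic_point_less_iff: "s < t \<Longrightarrow> dyadic_point s t l i < dyadic_point s t l j \<longleftrightarrow> i < j"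
  by (metis dyadic_point_strict_mono linorder_neq_iff order_less_asym)

lemma dyadic_point_first [simp]: "dyadic_point s t l 0 = s"
  and dyadic_point_last [simp]: "dyadic_point s t l (2^l) = t"
  unfolding dyadic_point_def by simp_all

lemma dyadic_point_step: "dyadic_point s t l (Suc j) - dyadic_point s t l j = (t - s) / 2^l"
  unfolding dyadic_point_def by (simp add: field_simps)

lemma dyadic_point_mono: "s \<le> t \<Longrightarrow> dyadic_point s t l j \<le> dyadic_point s t l (Suc j)"
proof -
  assume "s \<le> t"
  then have "0 \<le> (t - s) / 2^l" by simp
  then show ?thesis using dyadic_point_step[of s t l j] by linarith
qed

lemma dyadic_point_in: "s \<le> t \<Longrightarrow> j \<le> 2^l \<Longrightarrow> dyadic_point s t l j \<in> {s..t}"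
proof -
  assume st: "s \<le> t" and j: "j \<le> 2^l"
  have "real j / 2^l \<le> 1" using j by (simp add: field_simps)
  then have "real j / 2^l * (t - s) \<le> t - s" using st by (intro mult_left_le_one_le) auto
  then show ?thesis unfolding dyadic_point_def using st by simp
qed

lemma finite_dyadic_partition: "finite (dyadic_partition s t l)"
  unfolding dyadic_partition_def by simp

lemma dyadic_partition_subset: "s \<le> t \<Longrightarrow> dyadic_partition s t l \<subseteq> {s..t}"
  unfolding dyadic_partition_def using dyadic_point_in by auto

lemma dyadic_partition_endpoints: "s \<in> dyadic_partition s t l" "t \<in> dyadic_partition s t l"
  unfolding dyadic_partition_def using dyadic_point_first dyadic_point_last
  by (metis atMost_iff image_eqI zero_le le_refl)+

lemma dyadic_partition_trivial: "dyadic_partition s s l = {s}"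
  unfolding dyadic_partition_def dyadic_point_def by auto

lemma dyadic_partition_consecutive:
  assumes "s \<le> t" "consecutive (dyadic_partition s t l) x y"
  shows "y - x \<le> (t - s) / 2^l"
proof (cases "s = t")
  case True
  then show ?thesis using assms(2) by (auto simp: consecutive_def dyadic_partition_trivial)
next
  case False
  then have st: "s < t" using assms(1) by simp
  from assms(2) obtain i j where i: "i \<le> 2^l" "x = dyadic_point s t l i"
    and j: "j \<le> 2^l" "y = dyadic_point s t l j"
    and xy: "x < y" and gap: "\<forall>z\<in>dyadic_partition s t l. \<not> (x < z \<and> z < y)"
    unfolding consecutive_def dyadic_partition_def by auto
  have ij: "i < j" using xy i j dyadic_point_less_iff[OF st] by auto
  have "\<not> Suc i < j"
    using gap i j dyadic_point_less_iff[OF st, of l i "Suc i"] dyadic_point_less_iff[OF st, of l "Suc i" j]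
    unfolding dyadic_partition_def by auto
  then have "j = Suc i" using ij by simp
  then show ?thesis using i j dyadic_point_step by simp
qed

lemma partition_sum_dyadic:
  assumes "s < t"
  shows "partition_sum \<Xi> (dyadic_partition s t l) =
    (\<Sum>j<2^l. \<Xi> (dyadic_point s t l j) (dyadic_point s t l (Suc j)))"
proof -
  let ?D = "dyadic_partition s t l" and ?p = "dyadic_point s t l"
  have less_iff: "?p i < ?p j \<longleftrightarrow> i < j" for i j using dyadic_point_less_iff[OF assms] .
  have idx: "{x\<in>?D. \<exists>y\<in>?D. x < y} = ?p ` {..<2^l}"
  proof (intro set_eqI iffI)
    fix x assume "x \<in> {x\<in>?D. \<exists>y\<in>?D. x < y}"
    then obtain i j where "i \<le> 2^l" "x = ?p i" "j \<le> 2^l" "x < ?p j"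
      unfolding dyadic_partition_def by auto
    then show "x \<in> ?p ` {..<2^l}" using less_iff by force
  next
    fix x assume "x \<in> ?p ` {..<2^l}"
    then obtain i where "i < 2^l" "x = ?p i" by auto
    then show "x \<in> {x\<in>?D. \<exists>y\<in>?D. x < y}"
      using less_iff[of i "2^l"] dyadic_partition_endpoints(2)[of t s l] unfolding dyadic_partition_def
      by force
  qed
  have inj: "inj_on ?p {..<2^l}"
    by (rule inj_onI) (metis less_iff linorder_neq_iff)
  have next_dyadic: "next_point ?D (?p j) = ?p (Suc j)" if "j < 2^l" for j
  proof (rule next_point_eqI[OF finite_dyadic_partition])
    show "?p (Suc j) \<in> ?D" unfolding dyadic_partition_def using that by auto
    show "?p j < ?p (Suc j)" using less_iff by auto
    fix z assume "z \<in> ?D" "?p j < z"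
    then obtain k where "z = ?p k" "j < k" unfolding dyadic_partition_def using less_iff by auto
    then show "?p (Suc j) \<le> z" by (metis Suc_leI le_less less_iff)
  qed
  show ?thesis
    unfolding partition_sum_def idx sum.reindex[OF inj] comp_def by (rule sum.cong) (simp_all add: next_dyadic)
qed

definition nyi_germ :: "(real \<Rightarrow> 'a::euclidean_space \<Rightarrow> 'a) \<Rightarrow> (real \<Rightarrow> 'a) \<Rightarrow> real \<Rightarrow> real \<Rightarrow> 'a" where
  "nyi_germ A x u v = A v (x u) - A u (x u)"

lemma nyi_sum_eq_partition_sum:
  assumes "s \<le> t"
  shows "nyi_sum A x s t l = partition_sum (nyi_germ A x) (dyadic_partition s t l)"
proof (cases "s = t")
  case True
  then show ?thesis by (simp add: nyi_sum_def dyadic_partition_trivial partition_sum_singleton)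
next
  case False
  then show ?thesis using assms
    unfolding partition_sum_dyadic[OF order.not_eq_order_implies_strict[OF False assms]]
    by (simp add: nyi_sum_def nyi_germ_def dyadic_point_def Let_def)
qed

lemma has_nyi_trivial: "has_nyi A x s s I \<Longrightarrow> I = 0"
  unfolding has_nyi_def nyi_sum_def using LIMSEQ_unique[OF _ tendsto_const] by fastforce

definition vanishes_near_diagonal :: "(real \<Rightarrow> real \<Rightarrow> real) \<Rightarrow> real \<Rightarrow> real \<Rightarrow> bool" where
  "vanishes_near_diagonal W a b \<longleftrightarrow>
     (\<forall>\<epsilon>>0. \<exists>\<delta>>0. \<forall>u v. a \<le> u \<and> u \<le> v \<and> v \<le> b \<and> v - u < \<delta> \<longrightarrow> W u v \<le> \<epsilon>)"

context sewing
begin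

lemma dyadic_refinement_error:
  assumes small: "vanishes_near_diagonal \<omega> a b" and t: "a \<le> t" "t \<le> b" and e: "e > 0"
  shows "\<forall>\<^sub>F n in sequentially. \<forall>Q. finite Q \<and> dyadic_partition a t n \<subseteq> Q \<and> Q \<subseteq> {a..t} \<longrightarrow>
    norm (partition_sum \<Xi> Q - partition_sum \<Xi> (dyadic_partition a t n)) \<le> e"
proof -
  define C where "C = sewing_const \<theta> * (\<omega> a b + 1)"
  have C: "sewing_const \<theta> > 0" "\<omega> a b + 1 > 0"
    using sewing_const_pos[OF exponent_gt_1] control_nonneg[of a b] t by auto
  define \<epsilon> where "\<epsilon> = (e / C) powr (1 / (\<theta> - 1))"
  have \<epsilon>: "\<epsilon> > 0" "\<epsilon> powr (\<theta> - 1) = e / C"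
    unfolding \<epsilon>_def C_def using e C exponent_gt_1 by (simp_all add: powr_powr)
  obtain \<delta> where \<delta>: "\<delta> > 0" "\<forall>u v. a \<le> u \<and> u \<le> v \<and> v \<le> b \<and> v - u < \<delta> \<longrightarrow> \<omega> u v \<le> \<epsilon>"
    using small \<epsilon>(1) unfolding vanishes_near_diagonal_def by blast
  have "(\<lambda>n. (t - a) / 2 ^ n) \<longlonglongrightarrow> 0" by (intro LIMSEQ_divide_realpow_zero) simp
  then have "\<forall>\<^sub>F n in sequentially. (t - a) / 2 ^ n < \<delta>" using \<delta>(1) by (rule order_tendstoD)
  then show ?thesis
  proof (rule eventually_mono, intro allI impI)
    fix n Q assume n: "(t - a) / 2 ^ n < \<delta>"
      and Q: "finite Q \<and> dyadic_partition a t n \<subseteq> Q \<and> Q \<subseteq> {a..t}"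
    have mesh: "\<omega> x y \<le> \<epsilon>" if "consecutive (dyadic_partition a t n) x y" for x y
    proof -
      have xy: "x \<in> dyadic_partition a t n" "y \<in> dyadic_partition a t n" "x < y"
        using that unfolding consecutive_def by auto
      then have "a \<le> x" "y \<le> t" using dyadic_partition_subset[OF t(1), of n] by auto
      moreover have "y - x < \<delta>" using dyadic_partition_consecutive[OF t(1) that] n by linarith
      ultimately show ?thesis using \<delta>(2) t xy(3) by auto
    qed
    have "norm (partition_sum \<Xi> Q - partition_sum \<Xi> (dyadic_partition a t n))
        \<le> sewing_const \<theta> * \<epsilon> powr (\<theta> - 1) * \<omega> a t"
      using Q dyadic_partition_endpoints t \<epsilon>(1) mesh by (intro partition_sum_refine) auto
    also have "\<dots> \<le> sewing_const \<theta> * \<epsilon> powr (\<theta> - 1) * (\<omega> a b + 1)"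
      using control_mono[of a a t b] t sewing_const_pos[OF exponent_gt_1] by (intro mult_left_mono) auto
    also have "\<dots> = e * (sewing_const \<theta> * (\<omega> a b + 1)) / (sewing_const \<theta> * (\<omega> a b + 1))"
      unfolding \<epsilon>(2) C_def by simp
    also have "\<dots> = e" using C by simp
    finally show "norm (partition_sum \<Xi> Q - partition_sum \<Xi> (dyadic_partition a t n)) \<le> e" .
  qed
qed

lemma dyadic_difference_approx:
  fixes u v :: real and n :: nat
  defines "Q \<equiv> dyadic_partition a v n \<union> dyadic_partition a u n"
  assumes uv: "a \<le> u" "u \<le> v" "v \<le> b"
  shows "norm (partition_sum \<Xi> (dyadic_partition a v n) - partition_sum \<Xi> (dyadic_partition a u n) - \<Xi> u v)
    \<le> norm (partition_sum \<Xi> Q - partition_sum \<Xi> (dyadic_partition a v n))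
      + norm (partition_sum \<Xi> {x\<in>Q. x \<le> u} - partition_sum \<Xi> (dyadic_partition a u n))
      + sewing_const \<theta> * \<omega> u v powr \<theta>"
proof -
  let ?Dv = "partition_sum \<Xi> (dyadic_partition a v n)" and ?Du = "partition_sum \<Xi> (dyadic_partition a u n)"
  have finQ: "finite Q" unfolding Q_def by (simp add: finite_dyadic_partition)
  have Qsub: "Q \<subseteq> {a..v}"
    unfolding Q_def using dyadic_partition_subset[of a v n] dyadic_partition_subset[of a u n] uv by auto
  have uQ: "u \<in> Q" and vQ: "v \<in> Q" unfolding Q_def using dyadic_partition_endpoints by auto
  have "norm (partition_sum \<Xi> {x\<in>Q. u \<le> x} - \<Xi> u v) \<le> sewing_const \<theta> * \<omega> u v powr \<theta>"
    using finQ Qsub uQ vQ uv by (intro partition_sum_approx) auto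
  moreover
  define X1 X2 X3 where "X1 = partition_sum \<Xi> Q - ?Dv" and "X2 = partition_sum \<Xi> {x\<in>Q. x \<le> u} - ?Du"
    and "X3 = partition_sum \<Xi> {x\<in>Q. u \<le> x} - \<Xi> u v"
  have "?Dv - ?Du - \<Xi> u v = X2 + X3 - X1"
    using partition_sum_split[OF finQ uQ, of \<Xi>] unfolding X1_def X2_def X3_def by (simp add: algebra_simps)
  then have "norm (?Dv - ?Du - \<Xi> u v) \<le> norm X1 + norm X2 + norm X3"
    using norm_triangle_ineq[of X2 X3] norm_triangle_ineq4[of "X2 + X3" X1] by simp
  ultimately show ?thesis unfolding X1_def X2_def X3_def by linarith
qed

lemma sewing_estimate:
  assumes small: "vanishes_near_diagonal \<omega> a b"
    and lim: "\<And>t. a \<le> t \<Longrightarrow> t \<le> b \<Longrightarrow> (\<lambda>n. partition_sum \<Xi> (dyadic_partition a t n)) \<longlonglongrightarrow> I t"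
    and uv: "a \<le> u" "u \<le> v" "v \<le> b"
  shows "norm (I v - I u - \<Xi> u v) \<le> sewing_const \<theta> * \<omega> u v powr \<theta>"
proof (rule field_le_epsilon)
  fix e :: real assume "e > 0"
  then have e: "e/2 > 0" by simp
  let ?D = "dyadic_partition a" and ?Q = "\<lambda>n. dyadic_partition a v n \<union> dyadic_partition a u n"
  have av: "a \<le> v" and ub: "u \<le> b" using uv by linarith+
  have Qv: "finite (?Q n) \<and> ?D v n \<subseteq> ?Q n \<and> ?Q n \<subseteq> {a..v}"
    and Qu: "finite {x\<in>?Q n. x \<le> u} \<and> ?D u n \<subseteq> {x\<in>?Q n. x \<le> u} \<and> {x\<in>?Q n. x \<le> u} \<subseteq> {a..u}" for n
    using dyadic_partition_subset[of a v n] dyadic_partition_subset[of a u n] uv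
    by (auto simp: finite_dyadic_partition)
  have "\<forall>\<^sub>F n in sequentially. norm (partition_sum \<Xi> (?Q n) - partition_sum \<Xi> (?D v n)) \<le> e/2"
    using dyadic_refinement_error[OF small av uv(3) e] by (rule eventually_mono) (use Qv in blast)
  moreover have "\<forall>\<^sub>F n in sequentially.
      norm (partition_sum \<Xi> {x\<in>?Q n. x \<le> u} - partition_sum \<Xi> (?D u n)) \<le> e/2"
    using dyadic_refinement_error[OF small uv(1) ub e] by (rule eventually_mono) (use Qu in blast)
  ultimately have "\<forall>\<^sub>F n in sequentially. norm (partition_sum \<Xi> (?D v n) - partition_sum \<Xi> (?D u n) - \<Xi> u v)
      \<le> sewing_const \<theta> * \<omega> u v powr \<theta> + e"
  proof eventually_elim
    case (elim n)
    then show ?case using dyadic_difference_approx[OF uv, where n = n] by linarith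
  qed
  moreover have "(\<lambda>n. norm (partition_sum \<Xi> (?D v n) - partition_sum \<Xi> (?D u n) - \<Xi> u v))
      \<longlonglongrightarrow> norm (I v - I u - \<Xi> u v)"
    using lim[OF av uv(3)] lim[OF uv(1) ub] by (intro tendsto_intros)
  ultimately show "norm (I v - I u - \<Xi> u v) \<le> sewing_const \<theta> * \<omega> u v powr \<theta> + e"
    by (intro tendsto_upperbound) auto
qed

end

section \<open>Variation\<close>

text \<open>pvariation d q f u v is the q-th power of the q-variation of f on [u,v] with respect to d.\<close>

definition variation_sums :: "('b \<Rightarrow> 'b \<Rightarrow> real) \<Rightarrow> real \<Rightarrow> (real \<Rightarrow> 'b) \<Rightarrow> real \<Rightarrow> real \<Rightarrow> real set" where
  "variation_sums d q f u v = {(\<Sum>i<n. d (f (t (Suc i))) (f (t i)) powr q) | n t.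
      t 0 = u \<and> t n = v \<and> (\<forall>i<n. t i \<le> t (Suc i))}"

definition pvariation :: "('b \<Rightarrow> 'b \<Rightarrow> real) \<Rightarrow> real \<Rightarrow> (real \<Rightarrow> 'b) \<Rightarrow> real \<Rightarrow> real \<Rightarrow> real" where
  "pvariation d q f u v = Sup (variation_sums d q f u v)"

lemma chain_bounds:
  fixes t :: "nat \<Rightarrow> real"
  assumes "t 0 = u" "t n = v" "\<forall>i<n. t i \<le> t (Suc i)" "i \<le> n"
  shows "u \<le> t i \<and> t i \<le> v"
proof -
  have mono: "\<And>k. k \<in> {..<n} \<Longrightarrow> t k \<le> t (Suc k)" using assms(3) by auto
  have "t 0 \<le> t i" by (rule lift_Suc_mono_le_ivl[of "{..<n}" t, OF mono]) (use assms(4) in auto)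
  moreover have "t i \<le> t n" by (rule lift_Suc_mono_le_ivl[of "{..<n}" t, OF mono]) (use assms(4) in auto)
  ultimately show ?thesis using assms(1,2) by simp
qed

lemma finite_pvar_iff_bdd_above: "finite_pvar d q a b f \<longleftrightarrow> bdd_above (variation_sums d q f a b)"
proof
  assume "finite_pvar d q a b f"
  then obtain M where "\<forall>n t. t 0 = a \<and> t n = b \<and> (\<forall>i<n. t i \<le> t (Suc i)) \<longrightarrow>
      (\<Sum>i<n. d (f (t (Suc i))) (f (t i)) powr q) \<le> M"
    unfolding finite_pvar_def by blast
  then show "bdd_above (variation_sums d q f a b)" unfolding bdd_above_def variation_sums_def by blast
next
  assume "bdd_above (variation_sums d q f a b)"
  then obtain M where "\<forall>s\<in>variation_sums d q f a b. s \<le> M" unfolding bdd_above_def by blast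
  then show "finite_pvar d q a b f" unfolding finite_pvar_def variation_sums_def by blast
qed

lemma variation_sums_single: "u \<le> v \<Longrightarrow> d (f v) (f u) powr q \<in> variation_sums d q f u v"
  unfolding variation_sums_def
  by (rule CollectI, rule exI[of _ 1], rule exI[of _ "\<lambda>i. if i = 0 then u else v"]) auto

lemma variation_sums_concat:
  assumes "s1 \<in> variation_sums d q f u m" "s2 \<in> variation_sums d q f m v"
  shows "s1 + s2 \<in> variation_sums d q f u v"
proof -
  obtain n1 t1 where 1: "s1 = (\<Sum>i<n1. d (f (t1 (Suc i))) (f (t1 i)) powr q)" "t1 0 = u" "t1 n1 = m"
    "\<forall>i<n1. t1 i \<le> t1 (Suc i)" using assms(1) unfolding variation_sums_def by blast
  obtain n2 t2 where 2: "s2 = (\<Sum>i<n2. d (f (t2 (Suc i))) (f (t2 i)) powr q)" "t2 0 = m" "t2 n2 = v"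
    "\<forall>i<n2. t2 i \<le> t2 (Suc i)" using assms(2) unfolding variation_sums_def by blast
  define t where "t i = (if i \<le> n1 then t1 i else t2 (i - n1))" for i
  let ?g = "\<lambda>i. d (f (t (Suc i))) (f (t i)) powr q"
  have "(\<Sum>i<n1+n2. ?g i) = (\<Sum>i<n1. ?g i) + (\<Sum>i<n2. ?g (n1 + i))"
    by (induction n2) (simp_all add: add.assoc)
  also have "(\<Sum>i<n1. ?g i) = s1" unfolding 1 by (rule sum.cong) (auto simp: t_def)
  also have "(\<Sum>i<n2. ?g (n1 + i)) = s2" unfolding 2 by (rule sum.cong) (auto simp: t_def 1 2 Suc_diff_le)
  finally have "s1 + s2 = (\<Sum>i<n1+n2. ?g i)" ..
  moreover have "\<forall>i<n1+n2. t i \<le> t (Suc i)"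
  proof (intro allI impI)
    fix i assume i: "i < n1 + n2"
    show "t i \<le> t (Suc i)"
    proof (cases "i < n1")
      case True then show ?thesis using 1 by (auto simp: t_def)
    next
      case False
      then have "i - n1 < n2" "Suc i - n1 = Suc (i - n1)" using i by auto
      then show ?thesis using 2 False by (auto simp: t_def 1)
    qed
  qed
  moreover have "t 0 = u" "t (n1 + n2) = v" using 1 2 by (auto simp: t_def)
  ultimately show ?thesis unfolding variation_sums_def by blast
qed

lemma variation_sum_le_superinterval:
  assumes "s \<in> variation_sums d q f u v" "a \<le> u" "v \<le> b"
  shows "\<exists>s'\<in>variation_sums d q f a b. s \<le> s'"
proof -
  have "d (f u) (f a) powr q + s + d (f b) (f v) powr q \<in> variation_sums d q f a b"
    using variation_sums_concat[OF variation_sums_concat[OF variation_sums_single[OF assms(2)] assms(1)]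
        variation_sums_single[OF assms(3)]] .
  moreover have "s \<le> d (f u) (f a) powr q + s + d (f b) (f v) powr q" by simp
  ultimately show ?thesis by blast
qed

lemma bdd_above_variation_sums:
  assumes "finite_pvar d q a b f" "a \<le> u" "v \<le> b"
  shows "bdd_above (variation_sums d q f u v)"
proof -
  obtain M where M: "\<forall>s\<in>variation_sums d q f a b. s \<le> M"
    using assms(1) unfolding finite_pvar_iff_bdd_above bdd_above_def by blast
  have "s \<le> M" if "s \<in> variation_sums d q f u v" for s
    using variation_sum_le_superinterval[OF that assms(2,3)] M by force
  then show ?thesis unfolding bdd_above_def by blast
qed

lemma finite_pvar_subinterval:
  "finite_pvar d q a b f \<Longrightarrow> a \<le> u \<Longrightarrow> v \<le> b \<Longrightarrow> finite_pvar d q u v f"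
  unfolding finite_pvar_iff_bdd_above[of d q u v] by (rule bdd_above_variation_sums)

lemma variation_sum_le_pvariation:
  assumes "finite_pvar d q a b f" "a \<le> u" "v \<le> b" "s \<in> variation_sums d q f u v"
  shows "s \<le> pvariation d q f a b"
proof -
  obtain s' where s': "s' \<in> variation_sums d q f a b" "s \<le> s'"
    using variation_sum_le_superinterval[OF assms(4,2,3)] by blast
  have "bdd_above (variation_sums d q f a b)" using assms(1) unfolding finite_pvar_iff_bdd_above .
  then show ?thesis using cSup_upper[OF s'(1)] s'(2) unfolding pvariation_def by linarith
qed

lemma pvariation_ge_increment:
  "finite_pvar d q a b f \<Longrightarrow> a \<le> u \<Longrightarrow> u \<le> v \<Longrightarrow> v \<le> b \<Longrightarrow> d (f v) (f u) powr q \<le> pvariation d q f u v"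
  unfolding pvariation_def by (intro cSup_upper variation_sums_single bdd_above_variation_sums)

lemma pvariation_nonneg:
  "finite_pvar d q a b f \<Longrightarrow> a \<le> u \<Longrightarrow> u \<le> v \<Longrightarrow> v \<le> b \<Longrightarrow> 0 \<le> pvariation d q f u v"
  using pvariation_ge_increment by (meson order_trans powr_ge_zero)

lemma pvariation_least:
  assumes "u \<le> v" "\<And>n t. t 0 = u \<Longrightarrow> t n = v \<Longrightarrow> \<forall>i<n. t i \<le> t (Suc i) \<Longrightarrow>
      (\<Sum>i<n. d (f (t (Suc i))) (f (t i)) powr q) \<le> B"
  shows "pvariation d q f u v \<le> B"
proof -
  have "variation_sums d q f u v \<noteq> {}" using variation_sums_single[OF assms(1)] by blast
  moreover have "\<forall>s\<in>variation_sums d q f u v. s \<le> B" unfolding variation_sums_def using assms(2) by blast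
  ultimately show ?thesis unfolding pvariation_def by (meson cSup_least)
qed

lemma pvariation_superadditive:
  assumes "finite_pvar d q a b f" "a \<le> u" "u \<le> m" "m \<le> v" "v \<le> b"
  shows "pvariation d q f u m + pvariation d q f m v \<le> pvariation d q f u v"
proof -
  have bdd: "bdd_above (variation_sums d q f u v)"
    using assms by (intro bdd_above_variation_sums) auto
  have ne: "variation_sums d q f u m \<noteq> {}" "variation_sums d q f m v \<noteq> {}"
    using variation_sums_single assms by blast+
  have "s1 \<le> pvariation d q f u v - s2"
    if "s1 \<in> variation_sums d q f u m" "s2 \<in> variation_sums d q f m v" for s1 s2
    using cSup_upper[OF variation_sums_concat[OF that] bdd] unfolding pvariation_def by simp
  then have "pvariation d q f u m \<le> pvariation d q f u v - s2" if "s2 \<in> variation_sums d q f m v" for s2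
    using that ne(1) unfolding pvariation_def[of d q f u m] by (meson cSup_least)
  then have "s2 \<le> pvariation d q f u v - pvariation d q f u m" if "s2 \<in> variation_sums d q f m v" for s2
    using that by force
  then have "pvariation d q f m v \<le> pvariation d q f u v - pvariation d q f u m"
    using ne(2) unfolding pvariation_def[of d q f m v] by (meson cSup_least)
  then show ?thesis by simp
qed

lemma pvariation_mono:
  assumes "finite_pvar d q a b f" "a \<le> u" "u \<le> u'" "u' \<le> v'" "v' \<le> v" "v \<le> b"
  shows "pvariation d q f u' v' \<le> pvariation d q f u v"
  using pvariation_superadditive[OF assms(1), of u u' v] pvariation_superadditive[OF assms(1), of u' v' v]
    pvariation_nonneg[OF assms(1), of u u'] pvariation_nonneg[OF assms(1), of v' v] assms
  by linarith

lemma sum_le_superadditive: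
  fixes t :: "nat \<Rightarrow> real" and W :: "real \<Rightarrow> real \<Rightarrow> real"
  assumes sup: "\<And>x y z. a \<le> x \<Longrightarrow> x \<le> y \<Longrightarrow> y \<le> z \<Longrightarrow> z \<le> b \<Longrightarrow> W x y + W y z \<le> W x z"
    and diag: "\<And>x. a \<le> x \<Longrightarrow> x \<le> b \<Longrightarrow> 0 \<le> W x x"
    and t: "t 0 = u" "t n = v" "\<forall>i<n. t i \<le> t (Suc i)" "a \<le> u" "v \<le> b"
  shows "(\<Sum>i<n. W (t i) (t (Suc i))) \<le> W u v"
proof -
  have tb: "a \<le> t i \<and> t i \<le> b" if "i \<le> n" for i using chain_bounds[OF t(1-3) that] t by auto
  have "(\<Sum>i<k. W (t i) (t (Suc i))) \<le> W (t 0) (t k)" if "k \<le> n" for k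
    using that
  proof (induction k)
    case 0 then show ?case using diag tb by simp
  next
    case (Suc k)
    have "(\<Sum>i<Suc k. W (t i) (t (Suc i))) \<le> W (t 0) (t k) + W (t k) (t (Suc k))"
      using Suc by simp
    also have "\<dots> \<le> W (t 0) (t (Suc k))"
    proof (rule sup)
      show "a \<le> t 0" "t (Suc k) \<le> b" using tb Suc.prems by auto
      show "t k \<le> t (Suc k)" using t(3) Suc.prems by simp
      show "t 0 \<le> t k" using chain_bounds[of t "t 0" n "t n" k] t(3) Suc.prems by simp
    qed
    finally show ?case .
  qed
  from this[of n] show ?thesis using t(1,2) by simp
qed

lemma pvariation_le_control:
  assumes sup: "\<And>x y z. a \<le> x \<Longrightarrow> x \<le> y \<Longrightarrow> y \<le> z \<Longrightarrow> z \<le> b \<Longrightarrow> \<omega> x y + \<omega> y z \<le> \<omega> x z"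
    and incr: "\<And>x y. a \<le> x \<Longrightarrow> x \<le> y \<Longrightarrow> y \<le> b \<Longrightarrow> d (f y) (f x) powr q \<le> \<omega> x y"
    and "a \<le> b"
  shows "pvariation d q f a b \<le> \<omega> a b"
proof (rule pvariation_least[OF \<open>a \<le> b\<close>])
  fix n t assume t: "t 0 = a" "t n = b" "\<forall>i<n. t i \<le> t (Suc i)"
  have "(\<Sum>i<n. d (f (t (Suc i))) (f (t i)) powr q) \<le> (\<Sum>i<n. \<omega> (t i) (t (Suc i)))"
    using chain_bounds[OF t] t(3) by (intro sum_mono incr) auto
  also have "\<dots> \<le> \<omega> a b"
    using incr[of _ _, THEN order_trans[OF powr_ge_zero]] by (intro sum_le_superadditive[OF sup _ t]) auto
  finally show "(\<Sum>i<n. d (f (t (Suc i))) (f (t i)) powr q) \<le> \<omega> a b" .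
qed

lemma sum_powr_le_sum_powr_mult:
  fixes x :: "nat \<Rightarrow> real"
  assumes "\<forall>i<n. 0 \<le> x i \<and> x i \<le> \<epsilon>" "q \<le> q'"
  shows "(\<Sum>i<n. x i powr q') \<le> (\<Sum>i<n. x i powr q) * \<epsilon> powr (q' - q)"
  unfolding sum_distrib_right
proof (rule sum_mono)
  fix i assume "i \<in> {..<n}"
  then have "0 \<le> x i" "x i \<le> \<epsilon>" using assms(1) by auto
  then have "x i powr q * x i powr (q' - q) \<le> x i powr q * \<epsilon> powr (q' - q)"
    using assms(2) by (intro mult_left_mono powr_mono2) auto
  then show "x i powr q' \<le> x i powr q * \<epsilon> powr (q' - q)" by (simp flip: powr_add)
qed

lemma finite_pvar_larger_exponent:
  assumes fp: "finite_pvar d q a b f" and q: "0 < q" "q \<le> q'" and "a \<le> b"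
    and nonneg: "\<And>x y. a \<le> x \<Longrightarrow> x \<le> y \<Longrightarrow> y \<le> b \<Longrightarrow> 0 \<le> d (f y) (f x)"
  shows "finite_pvar d q' a b f"
  unfolding finite_pvar_def
proof (intro exI allI impI)
  define M where "M = pvariation d q f a b"
  have incr: "d (f y) (f x) \<le> M powr (1/q)" if "a \<le> x" "x \<le> y" "y \<le> b" for x y
  proof -
    have "(d (f y) (f x) powr q) powr (1/q) \<le> M powr (1/q)"
      using pvariation_ge_increment[OF fp that] pvariation_mono[OF fp, of a x y b] that q \<open>a \<le> b\<close>
      unfolding M_def by (intro powr_mono2) auto
    then show ?thesis using nonneg[OF that] q by (simp add: powr_powr)
  qed
  fix n t assume t: "t 0 = a \<and> t n = b \<and> (\<forall>i<n. t i \<le> t (Suc i))"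
  have "\<forall>i<n. 0 \<le> d (f (t (Suc i))) (f (t i)) \<and> d (f (t (Suc i))) (f (t i)) \<le> M powr (1/q)"
  proof (intro allI impI)
    fix i assume "i < n"
    then have "a \<le> t i" "t i \<le> t (Suc i)" "t (Suc i) \<le> b" using chain_bounds[of t a n b] t by auto
    then show "0 \<le> d (f (t (Suc i))) (f (t i)) \<and> d (f (t (Suc i))) (f (t i)) \<le> M powr (1/q)"
      using incr nonneg by blast
  qed
  then have "(\<Sum>i<n. d (f (t (Suc i))) (f (t i)) powr q') \<le>
      (\<Sum>i<n. d (f (t (Suc i))) (f (t i)) powr q) * (M powr (1/q)) powr (q' - q)"
    using q(2) by (rule sum_powr_le_sum_powr_mult)
  also have "\<dots> \<le> M * (M powr (1/q)) powr (q' - q)"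
    using variation_sum_le_pvariation[OF fp order_refl order_refl] t
    unfolding M_def variation_sums_def by (intro mult_right_mono) auto
  finally show "(\<Sum>i<n. d (f (t (Suc i))) (f (t i)) powr q') \<le> M * (M powr (1/q)) powr (q' - q)" .
qed

lemma vanishes_near_diagonal_pvariation:
  assumes fp: "finite_pvar d q a b f" and q: "0 < q" "q < q'" and "a \<le> b"
    and nonneg: "\<And>x y. a \<le> x \<Longrightarrow> x \<le> y \<Longrightarrow> y \<le> b \<Longrightarrow> 0 \<le> d (f y) (f x)"
    and small: "vanishes_near_diagonal (\<lambda>x y. d (f y) (f x)) a b"
  shows "vanishes_near_diagonal (pvariation d q' f) a b"
  unfolding vanishes_near_diagonal_def
proof (intro allI impI)
  fix \<epsilon> :: real assume \<epsilon>: "\<epsilon> > 0"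
  define M where "M = pvariation d q f a b"
  have M0: "0 \<le> M" unfolding M_def using pvariation_nonneg[OF fp] \<open>a \<le> b\<close> by simp
  define e where "e = (\<epsilon> / (M + 1)) powr (1 / (q' - q))"
  have e: "e > 0" "e powr (q' - q) = \<epsilon> / (M + 1)"
    unfolding e_def using \<epsilon> M0 q by (simp_all add: powr_powr)
  obtain \<delta> where \<delta>: "\<delta> > 0" "\<forall>x y. a \<le> x \<and> x \<le> y \<and> y \<le> b \<and> y - x < \<delta> \<longrightarrow> d (f y) (f x) \<le> e"
    using small e(1) unfolding vanishes_near_diagonal_def by blast
  have "pvariation d q' f u v \<le> \<epsilon>" if uv: "a \<le> u" "u \<le> v" "v \<le> b" "v - u < \<delta>" for u v
  proof -
    have "pvariation d q' f u v \<le> M * e powr (q' - q)"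
    proof (rule pvariation_least[OF uv(2)])
      fix n t assume t: "t 0 = u" "t n = v" "\<forall>i<n. t i \<le> t (Suc i)"
      have "\<forall>i<n. 0 \<le> d (f (t (Suc i))) (f (t i)) \<and> d (f (t (Suc i))) (f (t i)) \<le> e"
      proof (intro allI impI)
        fix i assume "i < n"
        then have "u \<le> t i" "t i \<le> t (Suc i)" "t (Suc i) \<le> v" using chain_bounds[OF t] t(3) by auto
        then show "0 \<le> d (f (t (Suc i))) (f (t i)) \<and> d (f (t (Suc i))) (f (t i)) \<le> e"
          using uv \<delta>(2) nonneg[of "t i" "t (Suc i)"] by auto
      qed
      then have "(\<Sum>i<n. d (f (t (Suc i))) (f (t i)) powr q') \<le>
          (\<Sum>i<n. d (f (t (Suc i))) (f (t i)) powr q) * e powr (q' - q)"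
        using q(2) by (intro sum_powr_le_sum_powr_mult) auto
      also have "\<dots> \<le> M * e powr (q' - q)"
        using variation_sum_le_pvariation[OF fp uv(1,3)] t unfolding M_def variation_sums_def
        by (intro mult_right_mono) auto
      finally show "(\<Sum>i<n. d (f (t (Suc i))) (f (t i)) powr q') \<le> M * e powr (q' - q)" .
    qed
    also have "\<dots> \<le> \<epsilon>" unfolding e(2) using M0 \<epsilon> by (simp add: field_simps)
    finally show ?thesis .
  qed
  then show "\<exists>\<delta>>0. \<forall>u v. a \<le> u \<and> u \<le> v \<and> v \<le> b \<and> v - u < \<delta> \<longrightarrow> pvariation d q' f u v \<le> \<epsilon>"
    using \<delta>(1) by blast
qed

lemma vanishes_near_diagonal_max:
  assumes "vanishes_near_diagonal W1 a b" "vanishes_near_diagonal W2 a b"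
  shows "vanishes_near_diagonal (\<lambda>u v. max (W1 u v) (W2 u v)) a b"
  unfolding vanishes_near_diagonal_def
proof (intro allI impI)
  fix \<epsilon> :: real assume "\<epsilon> > 0"
  obtain \<delta>1 where "\<delta>1 > 0" "\<forall>u v. a \<le> u \<and> u \<le> v \<and> v \<le> b \<and> v - u < \<delta>1 \<longrightarrow> W1 u v \<le> \<epsilon>"
    using assms(1) \<open>\<epsilon> > 0\<close> unfolding vanishes_near_diagonal_def by blast
  moreover obtain \<delta>2 where "\<delta>2 > 0" "\<forall>u v. a \<le> u \<and> u \<le> v \<and> v \<le> b \<and> v - u < \<delta>2 \<longrightarrow> W2 u v \<le> \<epsilon>"
    using assms(2) \<open>\<epsilon> > 0\<close> unfolding vanishes_near_diagonal_def by blast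
  ultimately show "\<exists>\<delta>>0. \<forall>u v. a \<le> u \<and> u \<le> v \<and> v \<le> b \<and> v - u < \<delta> \<longrightarrow> max (W1 u v) (W2 u v) \<le> \<epsilon>"
    by (intro exI[of _ "min \<delta>1 \<delta>2"]) auto
qed

lemma vanishes_near_diagonal_dist:
  assumes "continuous_on {a..b} f"
  shows "vanishes_near_diagonal (\<lambda>x y. dist (f y) (f x)) a b"
  unfolding vanishes_near_diagonal_def
proof (intro allI impI)
  fix e :: real assume "e > 0"
  moreover have "uniformly_continuous_on {a..b} f"
    by (rule compact_uniformly_continuous[OF assms compact_Icc])
  ultimately obtain \<delta> where "\<delta> > 0" "\<forall>x\<in>{a..b}. \<forall>x'\<in>{a..b}. dist x' x < \<delta> \<longrightarrow> dist (f x') (f x) < e"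
    unfolding uniformly_continuous_on_def by blast
  then show "\<exists>\<delta>>0. \<forall>x y. a \<le> x \<and> x \<le> y \<and> y \<le> b \<and> y - x < \<delta> \<longrightarrow> dist (f y) (f x) \<le> e"
    by (intro exI[of _ \<delta>]) (auto simp: dist_real_def less_imp_le)
qed

lemma increment_le_pvariation_root:
  assumes "finite_pvar d q a b f" "q > 0" "a \<le> u" "u \<le> v" "v \<le> b" "0 \<le> d (f v) (f u)"
  shows "d (f v) (f u) \<le> pvariation d q f u v powr (1/q)"
proof -
  have "(d (f v) (f u) powr q) powr (1/q) \<le> pvariation d q f u v powr (1/q)"
    using pvariation_ge_increment[OF assms(1,3-5)] assms(2) by (intro powr_mono2) auto
  then show ?thesis using assms(2,6) by (simp add: powr_powr)
qed

lemma vanishes_near_diagonal_subinterval: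
  "vanishes_near_diagonal W a b \<Longrightarrow> a \<le> a' \<Longrightarrow> b' \<le> b \<Longrightarrow> vanishes_near_diagonal W a' b'"
  unfolding vanishes_near_diagonal_def by (meson order_trans)

lemma vanishes_near_diagonal_le:
  assumes "vanishes_near_diagonal W a b" "\<And>u v. a \<le> u \<Longrightarrow> u \<le> v \<Longrightarrow> v \<le> b \<Longrightarrow> W' u v \<le> W u v"
  shows "vanishes_near_diagonal W' a b"
  using assms unfolding vanishes_near_diagonal_def by (meson order_trans)

lemma pvar_path_larger_exponent:
  assumes "pvar_path q a b x" "0 < q" "q < q'" "a \<le> b"
  shows "finite_pvar dist q' a b x" "vanishes_near_diagonal (pvariation dist q' x) a b"
  using assms finite_pvar_larger_exponent vanishes_near_diagonal_pvariation vanishes_near_diagonal_dist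
  unfolding pvar_path_def by (metis less_imp_le zero_le_dist)+

section \<open>Hoelder distance of vector fields\<close>

definition holder_pairs :: "real \<Rightarrow> ('a::euclidean_space \<times> 'a) set" where
  "holder_pairs K = {(x, y). x \<in> cball 0 K \<and> y \<in> cball 0 K \<and> x \<noteq> y}"

definition holder_quotient :: "real \<Rightarrow> ('a::euclidean_space \<Rightarrow> 'a) \<Rightarrow> 'a \<times> 'a \<Rightarrow> real" where
  "holder_quotient \<eta> g xy = norm (g (fst xy) - g (snd xy)) / norm (fst xy - snd xy) powr \<eta>"

definition holder_bounded :: "real \<Rightarrow> real \<Rightarrow> ('a::euclidean_space \<Rightarrow> 'a) \<Rightarrow> bool" where
  "holder_bounded K \<eta> g \<longleftrightarrow>
     bdd_above ((\<lambda>x. norm (g x)) ` cball 0 K) \<and> bdd_above (holder_quotient \<eta> g ` holder_pairs K)"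

lemma loc_holder_norm_eq:
  "loc_holder_norm K \<eta> g = (SUP x\<in>cball 0 K. norm (g x)) + (SUP xy\<in>holder_pairs K. holder_quotient \<eta> g xy)"
  unfolding loc_holder_norm_def holder_pairs_def holder_quotient_def ..

lemma holder_pairs_nonempty: "K > 0 \<Longrightarrow> holder_pairs K \<noteq> ({} :: ('a::euclidean_space \<times> 'a) set)"
proof -
  assume K: "K > 0"
  obtain e :: 'a where e: "e \<in> Basis" using nonempty_Basis by blast
  then have "norm (K *\<^sub>R e) = K" using K by (simp add: norm_Basis)
  then have "(K *\<^sub>R e, 0) \<in> holder_pairs K" unfolding holder_pairs_def using K by auto
  then show ?thesis by auto
qed

lemma loc_holder_imp_holder_bounded:
  assumes "loc_holder \<eta> g" "K > 0" "\<eta> > 0"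
  shows "holder_bounded K \<eta> g"
proof -
  obtain C where C: "\<forall>x\<in>cball 0 K. \<forall>y\<in>cball 0 K. norm (g x - g y) \<le> C * norm (x - y) powr \<eta>"
    using assms(1,2) unfolding loc_holder_def by blast
  have "norm (g x) \<le> norm (g 0) + \<bar>C\<bar> * K powr \<eta>" if x: "x \<in> cball 0 K" for x
  proof -
    have "norm (g x - g 0) \<le> C * norm x powr \<eta>" using C x assms(2) by (metis centre_in_cball diff_zero less_imp_le)
    also have "\<dots> \<le> \<bar>C\<bar> * K powr \<eta>"
      using x assms(3) by (intro mult_mono powr_mono2) auto
    finally show ?thesis by (metis add.commute norm_triangle_sub order_trans add_left_mono)
  qed
  moreover have "holder_quotient \<eta> g xy \<le> C" if xy: "xy \<in> holder_pairs K" for xy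
  proof -
    obtain x y where xy': "xy = (x, y)" "x \<in> cball 0 K" "y \<in> cball 0 K" "x \<noteq> y"
      using xy unfolding holder_pairs_def by auto
    then show ?thesis unfolding holder_quotient_def using C by (simp add: divide_le_eq)
  qed
  ultimately show ?thesis unfolding holder_bounded_def bdd_above_def by blast
qed

lemma loc_holder_diff:
  assumes "loc_holder \<eta> f" "loc_holder \<eta> g"
  shows "loc_holder \<eta> (\<lambda>z. f z - g z)"
  unfolding loc_holder_def
proof (intro allI impI)
  fix K :: real assume K: "K > 0"
  obtain C1 where C1: "\<forall>x\<in>cball 0 K. \<forall>y\<in>cball 0 K. norm (f x - f y) \<le> C1 * norm (x - y) powr \<eta>"
    using assms(1) K unfolding loc_holder_def by blast
  obtain C2 where C2: "\<forall>x\<in>cball 0 K. \<forall>y\<in>cball 0 K. norm (g x - g y) \<le> C2 * norm (x - y) powr \<eta>"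
    using assms(2) K unfolding loc_holder_def by blast
  have "norm ((f x - g x) - (f y - g y)) \<le> (C1 + C2) * norm (x - y) powr \<eta>"
    if "x \<in> cball 0 K" "y \<in> cball 0 K" for x y
  proof -
    have "norm ((f x - g x) - (f y - g y)) \<le> norm (f x - f y) + norm (g x - g y)"
      using norm_triangle_ineq4[of "f x - f y" "g x - g y"] by (simp add: algebra_simps)
    moreover have "norm (f x - f y) \<le> C1 * norm (x - y) powr \<eta>" "norm (g x - g y) \<le> C2 * norm (x - y) powr \<eta>"
      using C1 C2 that by auto
    ultimately show ?thesis by (simp add: distrib_right)
  qed
  then show "\<exists>C. \<forall>x\<in>cball 0 K. \<forall>y\<in>cball 0 K. norm (f x - g x - (f y - g y)) \<le> C * norm (x - y) powr \<eta>"
    by blast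
qed

lemma loc_holder_norm_bounds:
  assumes "holder_bounded K \<eta> g" "K > 0"
  shows "0 \<le> loc_holder_norm K \<eta> g"
    and "x \<in> cball 0 K \<Longrightarrow> norm (g x) \<le> loc_holder_norm K \<eta> g"
    and "x \<in> cball 0 K \<Longrightarrow> y \<in> cball 0 K \<Longrightarrow>
      norm (g x - g y) \<le> loc_holder_norm K \<eta> g * norm (x - y) powr \<eta>"
proof -
  have b1: "bdd_above ((\<lambda>x. norm (g x)) ` cball 0 K)" and b2: "bdd_above (holder_quotient \<eta> g ` holder_pairs K)"
    using assms(1) unfolding holder_bounded_def by auto
  have S1: "norm (g x) \<le> (SUP x\<in>cball 0 K. norm (g x))" if "x \<in> cball 0 K" for x
    using cSUP_upper[OF that b1] .
  have S1_nonneg: "0 \<le> (SUP x\<in>cball 0 K. norm (g x))"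
    using S1[of 0] assms(2) by (meson centre_in_cball less_imp_le norm_ge_zero order_trans)
  have S2: "holder_quotient \<eta> g xy \<le> (SUP xy\<in>holder_pairs K. holder_quotient \<eta> g xy)"
    if "xy \<in> holder_pairs K" for xy
    using cSUP_upper[OF that b2] .
  obtain xy0 :: "'a \<times> 'a" where xy0: "xy0 \<in> holder_pairs K" using holder_pairs_nonempty[OF assms(2)] by blast
  have "0 \<le> holder_quotient \<eta> g xy0" unfolding holder_quotient_def by simp
  then have S2_nonneg: "0 \<le> (SUP xy\<in>holder_pairs K. holder_quotient \<eta> g xy)" using S2[OF xy0] by linarith
  show "0 \<le> loc_holder_norm K \<eta> g" unfolding loc_holder_norm_eq using S1_nonneg S2_nonneg by simp
  show "x \<in> cball 0 K \<Longrightarrow> norm (g x) \<le> loc_holder_norm K \<eta> g"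
    unfolding loc_holder_norm_eq using S1 S2_nonneg by fastforce
  assume x: "x \<in> cball 0 K" and y: "y \<in> cball 0 K"
  show "norm (g x - g y) \<le> loc_holder_norm K \<eta> g * norm (x - y) powr \<eta>"
  proof (cases "x = y")
    case False
    then have "(x, y) \<in> holder_pairs K" unfolding holder_pairs_def using x y by auto
    then have "holder_quotient \<eta> g (x, y) \<le> loc_holder_norm K \<eta> g"
      unfolding loc_holder_norm_eq using S2 S1_nonneg by fastforce
    then show ?thesis unfolding holder_quotient_def using False by (simp add: divide_le_eq)
  qed simp
qed

lemma loc_holder_norm_add:
  assumes "holder_bounded K \<eta> f" "holder_bounded K \<eta> g" "K > 0"
  shows "holder_bounded K \<eta> (\<lambda>z. f z + g z)"
    and "loc_holder_norm K \<eta> (\<lambda>z. f z + g z) \<le> loc_holder_norm K \<eta> f + loc_holder_norm K \<eta> g"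
proof -
  have bf1: "bdd_above ((\<lambda>x. norm (f x)) ` cball 0 K)" and bf2: "bdd_above (holder_quotient \<eta> f ` holder_pairs K)"
    and bg1: "bdd_above ((\<lambda>x. norm (g x)) ` cball 0 K)" and bg2: "bdd_above (holder_quotient \<eta> g ` holder_pairs K)"
    using assms unfolding holder_bounded_def by auto
  have n1: "norm (f x + g x) \<le> (SUP x\<in>cball 0 K. norm (f x)) + (SUP x\<in>cball 0 K. norm (g x))"
    if "x \<in> cball 0 K" for x
    using cSUP_upper[OF that bf1] cSUP_upper[OF that bg1] norm_triangle_ineq[of "f x" "g x"] by linarith
  have n2: "holder_quotient \<eta> (\<lambda>z. f z + g z) xy \<le>
      (SUP xy\<in>holder_pairs K. holder_quotient \<eta> f xy) + (SUP xy\<in>holder_pairs K. holder_quotient \<eta> g xy)"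
    if "xy \<in> holder_pairs K" for xy
  proof -
    have "norm (f (fst xy) + g (fst xy) - (f (snd xy) + g (snd xy))) \<le>
          norm (f (fst xy) - f (snd xy)) + norm (g (fst xy) - g (snd xy))"
      by (metis add_diff_add norm_triangle_ineq)
    then have "holder_quotient \<eta> (\<lambda>z. f z + g z) xy \<le> holder_quotient \<eta> f xy + holder_quotient \<eta> g xy"
      unfolding holder_quotient_def by (simp add: add_divide_distrib[symmetric] divide_right_mono)
    then show ?thesis using cSUP_upper[OF that bf2] cSUP_upper[OF that bg2] by linarith
  qed
  show "holder_bounded K \<eta> (\<lambda>z. f z + g z)" unfolding holder_bounded_def bdd_above_def using n1 n2 by blast
  have "(SUP x\<in>cball 0 K. norm (f x + g x)) \<le> (SUP x\<in>cball 0 K. norm (f x)) + (SUP x\<in>cball 0 K. norm (g x))"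
    using assms(3) n1 by (intro cSUP_least) auto
  moreover have "(SUP xy\<in>holder_pairs K. holder_quotient \<eta> (\<lambda>z. f z + g z) xy) \<le>
      (SUP xy\<in>holder_pairs K. holder_quotient \<eta> f xy) + (SUP xy\<in>holder_pairs K. holder_quotient \<eta> g xy)"
    using holder_pairs_nonempty[OF assms(3)] n2 by (intro cSUP_least) auto
  ultimately show "loc_holder_norm K \<eta> (\<lambda>z. f z + g z) \<le> loc_holder_norm K \<eta> f + loc_holder_norm K \<eta> g"
    unfolding loc_holder_norm_eq by simp
qed

lemma loc_holder_norm_minus: "loc_holder_norm K \<eta> (\<lambda>z. - g z) = loc_holder_norm K \<eta> g"
proof -
  have "holder_quotient \<eta> (\<lambda>z. - g z) xy = holder_quotient \<eta> g xy" for xy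
  proof -
    have "- g (fst xy) - - g (snd xy) = - (g (fst xy) - g (snd xy))" by simp
    then show ?thesis unfolding holder_quotient_def by (metis norm_minus_cancel)
  qed
  then show ?thesis unfolding loc_holder_norm_eq by simp
qed

lemma loc_holder_norm_zero: "K > 0 \<Longrightarrow> loc_holder_norm K \<eta> (\<lambda>z. 0 :: 'a::euclidean_space) = 0"
proof -
  assume K: "K > 0"
  have "cball (0::'a) K \<noteq> {}" using K by auto
  moreover have "holder_pairs K \<noteq> ({} :: ('a \<times> 'a) set)" using holder_pairs_nonempty[OF K] .
  moreover have "holder_quotient \<eta> (\<lambda>z. 0::'a) = (\<lambda>_. 0)" unfolding holder_quotient_def by auto
  ultimately show ?thesis unfolding loc_holder_norm_eq by simp
qed

definition holder_dist :: "real \<Rightarrow> real \<Rightarrow> ('a::euclidean_space \<Rightarrow> 'a) \<Rightarrow> ('a \<Rightarrow> 'a) \<Rightarrow> real" where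
  "holder_dist K \<eta> g h = loc_holder_norm K \<eta> (\<lambda>z. g z - h z)"

lemma holder_bounded_diff:
  "loc_holder \<eta> g \<Longrightarrow> loc_holder \<eta> h \<Longrightarrow> K > 0 \<Longrightarrow> \<eta> > 0 \<Longrightarrow> holder_bounded K \<eta> (\<lambda>z. g z - h z)"
  by (intro loc_holder_imp_holder_bounded loc_holder_diff)

lemma holder_dist_nonneg:
  "loc_holder \<eta> g \<Longrightarrow> loc_holder \<eta> h \<Longrightarrow> K > 0 \<Longrightarrow> \<eta> > 0 \<Longrightarrow> 0 \<le> holder_dist K \<eta> g h"
  unfolding holder_dist_def by (intro loc_holder_norm_bounds(1) holder_bounded_diff)

lemma holder_dist_self: "K > 0 \<Longrightarrow> holder_dist K \<eta> g g = 0"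
  unfolding holder_dist_def by (simp add: loc_holder_norm_zero)

lemma holder_dist_commute: "holder_dist K \<eta> g h = holder_dist K \<eta> h g"
  unfolding holder_dist_def using loc_holder_norm_minus[of K \<eta> "\<lambda>z. h z - g z"] by simp

lemma holder_dist_triangle:
  assumes "loc_holder \<eta> f" "loc_holder \<eta> g" "loc_holder \<eta> h" "K > 0" "\<eta> > 0"
  shows "holder_dist K \<eta> f h \<le> holder_dist K \<eta> f g + holder_dist K \<eta> g h"
  using loc_holder_norm_add(2)[OF holder_bounded_diff[of \<eta> f g] holder_bounded_diff[of \<eta> g h]] assms
  unfolding holder_dist_def by simp

lemma norm_diff_le_holder_dist:
  "loc_holder \<eta> g \<Longrightarrow> loc_holder \<eta> h \<Longrightarrow> K > 0 \<Longrightarrow> \<eta> > 0 \<Longrightarrow> x \<in> cball 0 K \<Longrightarrow>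
    norm (g x - h x) \<le> holder_dist K \<eta> g h"
  unfolding holder_dist_def by (intro loc_holder_norm_bounds(2) holder_bounded_diff)

lemma holder_estimate_holder_dist:
  "loc_holder \<eta> g \<Longrightarrow> loc_holder \<eta> h \<Longrightarrow> K > 0 \<Longrightarrow> \<eta> > 0 \<Longrightarrow> x \<in> cball 0 K \<Longrightarrow> y \<in> cball 0 K \<Longrightarrow>
    norm ((g x - h x) - (g y - h y)) \<le> holder_dist K \<eta> g h * norm (x - y) powr \<eta>"
  unfolding holder_dist_def by (intro loc_holder_norm_bounds(3) holder_bounded_diff)

lemma pvar_field_finite_pvar:
  "pvar_field p \<eta> A \<Longrightarrow> K > 0 \<Longrightarrow> finite_pvar (holder_dist K \<eta>) p 0 1 A"
  unfolding pvar_field_def holder_dist_def[abs_def] by blast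

lemma pvar_field_continuous:
  assumes "pvar_field p \<eta> A" "K > 0" "t \<in> {0..1}" "e > 0"
  shows "\<exists>d>0. \<forall>s\<in>{0..1}. \<bar>s - t\<bar> < d \<longrightarrow> holder_dist K \<eta> (A s) (A t) < e"
proof -
  have "((\<lambda>s. holder_dist K \<eta> (A s) (A t)) \<longlongrightarrow> 0) (at t within {0..1})"
    using assms(1-3) unfolding pvar_field_def holder_dist_def by blast
  then obtain d where d: "d > 0"
    "\<forall>s\<in>{0..1}. s \<noteq> t \<and> dist s t < d \<longrightarrow> dist (holder_dist K \<eta> (A s) (A t)) 0 < e"
    using assms(4) unfolding tendsto_iff eventually_at by blast
  then show ?thesis
    using assms(2,4) holder_dist_self[of K \<eta> "A t"] by (intro exI[of _ d]) (auto simp: dist_real_def)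
qed

lemma continuous_on_holder_dist_field:
  assumes A: "pvar_field p \<eta> A" and K: "K > 0" and \<eta>: "\<eta> > 0"
  shows "continuous_on ({0..1} \<times> {0..1}) (\<lambda>x. holder_dist K \<eta> (A (snd x)) (A (fst x)))"
  unfolding continuous_on_iff
proof (intro ballI allI impI)
  let ?F = "\<lambda>s t. holder_dist K \<eta> (A t) (A s)"
  have hA: "\<forall>t\<in>{0..1}. loc_holder \<eta> (A t)" using A unfolding pvar_field_def by blast
  have tri: "?F s u \<le> ?F s t + ?F t u" if "s \<in> {0..1}" "t \<in> {0..1}" "u \<in> {0..1}" for s t u
    using holder_dist_triangle[of \<eta> "A u" "A t" "A s" K] hA that K \<eta> by simp
  fix x e assume x: "x \<in> {0..1::real} \<times> {0..1::real}" and e: "(e::real) > 0"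
  obtain s0 t0 where x0: "x = (s0, t0)" "s0 \<in> {0..1}" "t0 \<in> {0..1}" using x by auto
  obtain d1 where d1: "d1 > 0" "\<forall>s\<in>{0..1}. \<bar>s - s0\<bar> < d1 \<longrightarrow> ?F s0 s < e/2"
    using pvar_field_continuous[OF A K x0(2), of "e/2"] e by auto
  obtain d2 where d2: "d2 > 0" "\<forall>s\<in>{0..1}. \<bar>s - t0\<bar> < d2 \<longrightarrow> ?F t0 s < e/2"
    using pvar_field_continuous[OF A K x0(3), of "e/2"] e by auto
  show "\<exists>d>0. \<forall>x'\<in>{0..1} \<times> {0..1}. dist x' x < d \<longrightarrow>
      dist (holder_dist K \<eta> (A (snd x')) (A (fst x'))) (holder_dist K \<eta> (A (snd x)) (A (fst x))) < e"
  proof (intro exI[of _ "min d1 d2"] conjI ballI impI)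
    show "min d1 d2 > 0" using d1 d2 by simp
    fix x' assume x': "x' \<in> {0..1} \<times> {0..1}" and dx: "dist x' x < min d1 d2"
    obtain s t where xs: "x' = (s, t)" "s \<in> {0..1}" "t \<in> {0..1}" using x' by auto
    have "\<bar>s - s0\<bar> < d1" "\<bar>t - t0\<bar> < d2"
      using dist_fst_le[of x' x] dist_snd_le[of x' x] dx xs x0 by (auto simp: dist_real_def)
    then have "?F s0 s < e/2" "?F t0 t < e/2" using d1 d2 xs by auto
    moreover have "?F s t \<le> ?F s s0 + ?F s0 t0 + ?F t0 t" "?F s0 t0 \<le> ?F s0 s + ?F s t + ?F t t0"
      using tri[of s s0 t] tri[of s0 t0 t] tri[of s0 s t0] tri[of s t t0] xs x0 by auto
    moreover have "?F s s0 = ?F s0 s" "?F t t0 = ?F t0 t" using holder_dist_commute by auto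
    ultimately show "dist (holder_dist K \<eta> (A (snd x')) (A (fst x'))) (holder_dist K \<eta> (A (snd x)) (A (fst x))) < e"
      using xs x0 by (simp add: dist_real_def abs_less_iff)
  qed
qed

lemma vanishes_near_diagonal_field:
  assumes "pvar_field p \<eta> A" "K > 0" "\<eta> > 0"
  shows "vanishes_near_diagonal (\<lambda>s t. holder_dist K \<eta> (A t) (A s)) 0 1"
  unfolding vanishes_near_diagonal_def
proof (intro allI impI)
  let ?G = "\<lambda>x. holder_dist K \<eta> (A (snd x)) (A (fst x))"
  fix e :: real assume e: "e > 0"
  have "uniformly_continuous_on ({0..1} \<times> {0..1}) ?G"
    by (intro compact_uniformly_continuous continuous_on_holder_dist_field[OF assms] compact_Times compact_Icc)
  then obtain d where d: "d > 0" "\<forall>x\<in>{0..1} \<times> {0..1}. \<forall>x'\<in>{0..1} \<times> {0..1}. dist x' x < d \<longrightarrow> dist (?G x') (?G x) < e"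
    using e unfolding uniformly_continuous_on_def by blast
  have "holder_dist K \<eta> (A t) (A s) \<le> e" if st: "0 \<le> s" "s \<le> t" "t \<le> 1" "t - s < d" for s t
  proof -
    have "dist (s, t) (t, t) < d" using st by (simp add: dist_Pair_Pair dist_real_def)
    then have "dist (?G (s, t)) (?G (t, t)) < e" using d st by auto
    then show ?thesis using holder_dist_self[OF assms(2), of \<eta> "A t"] by (simp add: dist_real_def)
  qed
  then show "\<exists>d>0. \<forall>s t. 0 \<le> s \<and> s \<le> t \<and> t \<le> 1 \<and> t - s < d \<longrightarrow> holder_dist K \<eta> (A t) (A s) \<le> e"
    using d(1) by blast
qed

lemma pvar_field_larger_exponent:
  assumes "pvar_field p \<eta> A" "K > 0" "\<eta> > 0" "0 < p" "p < p'"
  shows "finite_pvar (holder_dist K \<eta>) p' 0 1 A"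
    and "vanishes_near_diagonal (pvariation (holder_dist K \<eta>) p' A) 0 1"
proof -
  have "0 \<le> holder_dist K \<eta> (A t) (A s)" if "0 \<le> s" "s \<le> t" "t \<le> 1" for s t
    using assms(1-3) that unfolding pvar_field_def by (intro holder_dist_nonneg) auto
  then show "finite_pvar (holder_dist K \<eta>) p' 0 1 A"
    "vanishes_near_diagonal (pvariation (holder_dist K \<eta>) p' A) 0 1"
    using assms vanishes_near_diagonal_field[OF assms(1-3)] pvar_field_finite_pvar[OF assms(1,2)]
    by (auto intro: finite_pvar_larger_exponent vanishes_near_diagonal_pvariation)
qed

section \<open>The Young estimate\<close>

lemma young_inequality_nonneg:
  fixes x y l :: real
  assumes "0 \<le> x" "0 \<le> y" "0 < l" "l < 1"
  shows "x powr l * y powr (1 - l) \<le> l * x + (1 - l) * y"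
  using Youngs_inequality_0[of l "1 - l" x y] assms by (cases "x = 0 \<or> y = 0") auto

lemma holder_inequality_two_terms:
  fixes a1 a2 b1 b2 l :: real
  assumes "0 \<le> a1" "0 \<le> a2" "0 \<le> b1" "0 \<le> b2" "0 < l" "l < 1"
  shows "a1 powr l * b1 powr (1 - l) + a2 powr l * b2 powr (1 - l) \<le> (a1 + a2) powr l * (b1 + b2) powr (1 - l)"
proof (cases "a1 + a2 = 0 \<or> b1 + b2 = 0")
  case True
  then have "(a1 = 0 \<and> a2 = 0) \<or> (b1 = 0 \<and> b2 = 0)" using assms by auto
  then show ?thesis using assms by auto
next
  case False
  define S where "S = a1 + a2"
  define T where "T = b1 + b2"
  have S: "S > 0" and T: "T > 0" using False assms unfolding S_def T_def by auto
  have key: "a powr l * b powr (1 - l) \<le> S powr l * T powr (1 - l) * (l * (a / S) + (1 - l) * (b / T))"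
    if "0 \<le> a" "0 \<le> b" for a b
  proof -
    have "a powr l * b powr (1 - l) = S powr l * T powr (1 - l) * ((a / S) powr l * (b / T) powr (1 - l))"
      using S T by (simp add: powr_divide field_simps)
    also have "\<dots> \<le> S powr l * T powr (1 - l) * (l * (a / S) + (1 - l) * (b / T))"
      using young_inequality_nonneg[of "a / S" "b / T" l] that S T assms(5,6) by (intro mult_left_mono) auto
    finally show ?thesis .
  qed
  have "a1 powr l * b1 powr (1 - l) + a2 powr l * b2 powr (1 - l) \<le>
      S powr l * T powr (1 - l) * (l * ((a1 + a2) / S) + (1 - l) * ((b1 + b2) / T))"
    using key[of a1 b1] key[of a2 b2] assms by (simp add: algebra_simps add_divide_distrib)
  also have "\<dots> = S powr l * T powr (1 - l)" using S T unfolding S_def T_def by simp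
  finally show ?thesis unfolding S_def T_def .
qed

lemma nyi_germ_defect:
  assumes "loc_holder \<eta> (A v)" "loc_holder \<eta> (A m)" "K > 0" "\<eta> > 0" "x u \<in> cball 0 K" "x m \<in> cball 0 K"
  shows "norm (nyi_germ A x u v - nyi_germ A x u m - nyi_germ A x m v)
    \<le> holder_dist K \<eta> (A v) (A m) * norm (x u - x m) powr \<eta>"
proof -
  have "nyi_germ A x u v - nyi_germ A x u m - nyi_germ A x m v
      = (A v (x u) - A m (x u)) - (A v (x m) - A m (x m))"
    unfolding nyi_germ_def by (simp add: algebra_simps)
  then show ?thesis using holder_estimate_holder_dist[OF assms] by simp
qed

lemma geometric_mean_superadditive:
  fixes W1 W2 :: "real \<Rightarrow> real \<Rightarrow> real"
  assumes nonneg: "\<And>u v. a \<le> u \<Longrightarrow> u \<le> v \<Longrightarrow> v \<le> b \<Longrightarrow> 0 \<le> W1 u v \<and> 0 \<le> W2 u v"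
    and sup1: "W1 u m + W1 m v \<le> W1 u v" and sup2: "W2 u m + W2 m v \<le> W2 u v"
    and l: "0 < l" "l < 1" and umv: "a \<le> u" "u \<le> m" "m \<le> v" "v \<le> b"
  shows "W1 u m powr l * W2 u m powr (1 - l) + W1 m v powr l * W2 m v powr (1 - l)
    \<le> W1 u v powr l * W2 u v powr (1 - l)"
proof -
  have "W1 u m powr l * W2 u m powr (1 - l) + W1 m v powr l * W2 m v powr (1 - l)
      \<le> (W1 u m + W1 m v) powr l * (W2 u m + W2 m v) powr (1 - l)"
    using nonneg umv l by (intro holder_inequality_two_terms) auto
  also have "\<dots> \<le> W1 u v powr l * W2 u v powr (1 - l)"
    using nonneg[of u m] nonneg[of m v] sup1 sup2 umv l by (intro mult_mono powr_mono2) auto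
  finally show ?thesis .
qed

lemma vanishes_near_diagonal_geometric_mean:
  fixes W1 W2 :: "real \<Rightarrow> real \<Rightarrow> real"
  assumes "vanishes_near_diagonal W1 a b" "vanishes_near_diagonal W2 a b"
    and nonneg: "\<And>u v. a \<le> u \<Longrightarrow> u \<le> v \<Longrightarrow> v \<le> b \<Longrightarrow> 0 \<le> W1 u v \<and> 0 \<le> W2 u v"
    and l: "0 < l" "l < 1"
  shows "vanishes_near_diagonal (\<lambda>u v. W1 u v powr l * W2 u v powr (1 - l)) a b"
proof (rule vanishes_near_diagonal_le[OF vanishes_near_diagonal_max[OF assms(1,2)]])
  fix u v assume uv: "a \<le> u" "u \<le> v" "v \<le> b"
  let ?M = "max (W1 u v) (W2 u v)"
  have "W1 u v powr l * W2 u v powr (1 - l) \<le> ?M powr l * ?M powr (1 - l)"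
    using nonneg[OF uv] l by (intro mult_mono powr_mono2) auto
  moreover have "?M powr l * ?M powr (1 - l) = ?M"
    using nonneg[OF uv] by (simp add: abs_of_nonneg le_max_iff_disj flip: powr_add)
  ultimately show "W1 u v powr l * W2 u v powr (1 - l) \<le> ?M" by simp
qed

lemma nyi_germ_defect_le_pvariation:
  fixes A :: "real \<Rightarrow> 'a::euclidean_space \<Rightarrow> 'a" and x :: "real \<Rightarrow> 'a" and K \<eta> p \<zeta> :: real
  defines "WA \<equiv> pvariation (holder_dist K \<eta>) p A" and "Wx \<equiv> pvariation dist \<zeta> x"
  assumes hA: "\<forall>t\<in>{a..b}. loc_holder \<eta> (A t)" and K: "K > 0" and \<eta>: "\<eta> > 0" and exps: "p > 0" "\<zeta> > 0"
    and fA: "finite_pvar (holder_dist K \<eta>) p a b A" and fx: "finite_pvar dist \<zeta> a b x"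
    and xK: "\<And>s. a \<le> s \<Longrightarrow> s \<le> b \<Longrightarrow> x s \<in> cball 0 K"
    and umv: "a \<le> u" "u \<le> m" "m \<le> v" "v \<le> b"
  shows "norm (nyi_germ A x u v - nyi_germ A x u m - nyi_germ A x m v) \<le> WA u v powr (1/p) * Wx u v powr (\<eta>/\<zeta>)"
proof -
  have hd_nonneg: "0 \<le> holder_dist K \<eta> (A v) (A m)"
    using hA umv K \<eta> by (intro holder_dist_nonneg) auto
  have "holder_dist K \<eta> (A v) (A m) \<le> WA m v powr (1/p)"
    using increment_le_pvariation_root[OF fA exps(1), of m v] umv hd_nonneg unfolding WA_def by auto
  also have "\<dots> \<le> WA u v powr (1/p)"
    using pvariation_mono[OF fA, of u m v v] pvariation_nonneg[OF fA, of m v] umv exps(1) unfolding WA_def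
    by (intro powr_mono2) auto
  finally have hd: "holder_dist K \<eta> (A v) (A m) \<le> WA u v powr (1/p)" .
  have "norm (x u - x m) \<le> Wx u m powr (1/\<zeta>)"
    using increment_le_pvariation_root[OF fx exps(2), of u m] umv unfolding Wx_def
    by (simp add: dist_norm norm_minus_commute)
  also have "\<dots> \<le> Wx u v powr (1/\<zeta>)"
    using pvariation_mono[OF fx, of u u m v] pvariation_nonneg[OF fx, of u m] umv exps unfolding Wx_def
    by (intro powr_mono2) auto
  finally have "norm (x u - x m) powr \<eta> \<le> (Wx u v powr (1/\<zeta>)) powr \<eta>"
    using \<eta> by (intro powr_mono2) auto
  then have dx: "norm (x u - x m) powr \<eta> \<le> Wx u v powr (\<eta>/\<zeta>)" by (simp add: powr_powr)
  have "norm (nyi_germ A x u v - nyi_germ A x u m - nyi_germ A x m v)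
      \<le> holder_dist K \<eta> (A v) (A m) * norm (x u - x m) powr \<eta>"
    using hA umv K \<eta> xK by (intro nyi_germ_defect) auto
  also have "\<dots> \<le> WA u v powr (1/p) * Wx u v powr (\<eta>/\<zeta>)"
    using hd hd_nonneg dx by (intro mult_mono) auto
  finally show ?thesis .
qed

lemma young_estimate:
  fixes A :: "real \<Rightarrow> 'a::euclidean_space \<Rightarrow> 'a" and x :: "real \<Rightarrow> 'a" and K \<eta> p \<zeta> :: real
  defines "WA \<equiv> pvariation (holder_dist K \<eta>) p A" and "Wx \<equiv> pvariation dist \<zeta> x"
  assumes hA: "\<forall>t\<in>{a..b}. loc_holder \<eta> (A t)" and K: "K > 0" and \<eta>: "\<eta> > 0"
    and exps: "p > 0" "\<zeta> > 0" "1/p + \<eta>/\<zeta> > 1"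
    and fA: "finite_pvar (holder_dist K \<eta>) p a b A" and smallA: "vanishes_near_diagonal WA a b"
    and fx: "finite_pvar dist \<zeta> a b x" and smallx: "vanishes_near_diagonal Wx a b"
    and xK: "\<And>s. a \<le> s \<Longrightarrow> s \<le> b \<Longrightarrow> x s \<in> cball 0 K"
    and sol: "\<And>t. a \<le> t \<Longrightarrow> t \<le> b \<Longrightarrow> has_nyi A x a t (x t - x a)"
    and uv: "a \<le> u" "u \<le> v" "v \<le> b"
  shows "norm (x v - x u - nyi_germ A x u v) \<le>
    sewing_const (1/p + \<eta>/\<zeta>) * WA u v powr (1/p) * Wx u v powr (\<eta>/\<zeta>)"
proof -
  define \<theta> where "\<theta> = 1/p + \<eta>/\<zeta>"
  define l where "l = (1/p) / \<theta>"
  have \<theta>: "\<theta> > 1" using exps unfolding \<theta>_def by simp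
  have l_eq: "l = \<zeta> / (\<zeta> + \<eta> * p)" unfolding l_def \<theta>_def using exps by (simp add: field_simps)
  have "\<eta> * p > 0" using \<eta> exps by simp
  then have l: "0 < l" "l < 1" unfolding l_eq using exps by auto
  have "l * \<theta> = 1/p" unfolding l_def using \<theta> by simp
  moreover have "(1 - l) * \<theta> = \<theta> - l * \<theta>" by (simp add: algebra_simps)
  ultimately have l\<theta>: "l * \<theta> = 1/p" "(1 - l) * \<theta> = \<eta>/\<zeta>" unfolding \<theta>_def by simp_all
  define \<omega> where "\<omega> u v = WA u v powr l * Wx u v powr (1 - l)" for u v
  have nonneg: "0 \<le> WA u v \<and> 0 \<le> Wx u v" if "a \<le> u" "u \<le> v" "v \<le> b" for u v
    unfolding WA_def Wx_def using that fA fx by (auto intro: pvariation_nonneg)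
  have \<omega>_powr: "\<omega> u v powr \<theta> = WA u v powr (1/p) * Wx u v powr (\<eta>/\<zeta>)" if "a \<le> u" "u \<le> v" "v \<le> b" for u v
    unfolding \<omega>_def using nonneg[OF that] l\<theta> by (simp add: powr_mult powr_powr)
  interpret sewing "nyi_germ A x" \<omega> a b \<theta>
  proof
    fix u m v assume umv: "a \<le> u" "u \<le> m" "m \<le> v" "v \<le> b"
    show "\<omega> u m + \<omega> m v \<le> \<omega> u v"
      unfolding \<omega>_def WA_def Wx_def
      by (rule geometric_mean_superadditive[OF nonneg[unfolded WA_def Wx_def]
            pvariation_superadditive[OF fA umv] pvariation_superadditive[OF fx umv] l umv])
    show "norm (nyi_germ A x u v - nyi_germ A x u m - nyi_germ A x m v) \<le> \<omega> u v powr \<theta>"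
      using nyi_germ_defect_le_pvariation[OF hA K \<eta> exps(1,2) fA fx xK umv] \<omega>_powr[of u v] umv
      unfolding WA_def Wx_def by simp
  qed (use \<theta> nonneg in \<open>auto simp: \<omega>_def\<close>)
  have "vanishes_near_diagonal \<omega> a b"
    unfolding \<omega>_def using smallA smallx nonneg l by (rule vanishes_near_diagonal_geometric_mean)
  then have "norm ((x v - x a) - (x u - x a) - nyi_germ A x u v) \<le> sewing_const \<theta> * \<omega> u v powr \<theta>"
    using sol uv unfolding has_nyi_def
    by (intro sewing_estimate) (auto simp flip: nyi_sum_eq_partition_sum)
  then show ?thesis using \<omega>_powr[OF uv] unfolding \<theta>_def by (simp add: mult.assoc)
qed

lemma bootstrap_bound:
  fixes X \<alpha> C \<eta> :: real
  assumes "0 \<le> X" "0 \<le> \<alpha>" "C > 0" "0 \<le> \<eta>" "\<eta> \<le> 1" "C * \<alpha> \<le> 1/2" "X \<le> \<alpha> * (1 + C * X powr \<eta>)"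
  shows "X \<le> (2 + C) * \<alpha>"
proof (cases "X \<le> 1")
  case True
  then have "X powr \<eta> \<le> 1" using assms(1,4) by (intro powr_le1) auto
  then have "\<alpha> * (1 + C * X powr \<eta>) \<le> \<alpha> * (1 + C)" using assms(2,3) by (intro mult_left_mono) auto
  then have "X \<le> \<alpha> * (1 + C)" using assms(7) by linarith
  then show ?thesis using assms(2) by (simp add: algebra_simps)
next
  case False
  then have "X powr \<eta> \<le> X" using assms(5) powr_mono[of \<eta> 1 X] by simp
  then have "\<alpha> * (1 + C * X powr \<eta>) \<le> \<alpha> * (1 + C * X)" using assms(2,3) by (intro mult_left_mono) auto
  moreover have "\<alpha> * (1 + C * X) = \<alpha> + (C * \<alpha>) * X" by (simp add: algebra_simps)
  ultimately have "X \<le> \<alpha> + (C * \<alpha>) * X" using assms(7) by linarith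
  also have "\<dots> \<le> \<alpha> + X / 2" using mult_right_mono[OF assms(6) assms(1)] by simp
  finally have "X \<le> 2 * \<alpha>" by linarith
  moreover have "(2 + C) * \<alpha> = 2 * \<alpha> + C * \<alpha>" by (simp add: distrib_right)
  moreover have "0 \<le> C * \<alpha>" using assms(2,3) by simp
  ultimately show ?thesis by linarith
qed

text \<open>On short intervals the variation of a solution is bounded by that of the field alone; this is
  what removes the unknown variation of the flow trajectories from the defect estimate.\<close>

lemma apriori_pvariation_bound:
  fixes A :: "real \<Rightarrow> 'a::euclidean_space \<Rightarrow> 'a" and w :: "real \<Rightarrow> 'a" and K \<eta> p :: real
  defines "WA \<equiv> pvariation (holder_dist K \<eta>) p A" and "Ww \<equiv> pvariation dist p w"
  assumes hA: "\<forall>t\<in>{a..b}. loc_holder \<eta> (A t)" and K: "K > 0" and \<eta>: "0 < \<eta>" "\<eta> \<le> 1"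
    and p: "p > 0" and C: "C > 0"
    and fA: "finite_pvar (holder_dist K \<eta>) p a b A" and fw: "finite_pvar dist p a b w"
    and wK: "\<And>s. a \<le> s \<Longrightarrow> s \<le> b \<Longrightarrow> w s \<in> cball 0 K"
    and germ: "\<And>u v. a \<le> u \<Longrightarrow> u \<le> v \<Longrightarrow> v \<le> b \<Longrightarrow>
        norm (w v - w u - nyi_germ A w u v) \<le> C * WA u v powr (1/p) * Ww u v powr (\<eta>/p)"
    and r: "a \<le> r" "r \<le> b" and small: "C * WA a r powr (1/p) \<le> 1/2"
  shows "Ww a r powr (1/p) \<le> (2 + C) * WA a r powr (1/p)"
proof -
  define X where "X = Ww a r powr (1/p)"
  define B where "B = 1 + C * X powr \<eta>"
  have B: "B \<ge> 1" unfolding B_def using C by simp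
  have incr: "dist (w v) (w u) powr p \<le> WA u v * B powr p" if uv: "a \<le> u" "u \<le> v" "v \<le> r" for u v
  proof -
    have "norm (nyi_germ A w u v) \<le> WA u v powr (1/p)"
      using norm_diff_le_holder_dist[of \<eta> "A v" "A u" K "w u"] increment_le_pvariation_root[OF fA p, of u v]
        holder_dist_nonneg[of \<eta> "A v" "A u" K] hA K \<eta> wK uv r unfolding nyi_germ_def WA_def by auto
    moreover have "norm (w v - w u - nyi_germ A w u v) \<le> C * WA u v powr (1/p) * X powr \<eta>"
    proof -
      have "Ww u v powr (\<eta>/p) = (Ww u v powr (1/p)) powr \<eta>" by (simp add: powr_powr)
      also have "\<dots> \<le> X powr \<eta>"
        using pvariation_mono[OF fw, of a u v r] pvariation_nonneg[OF fw, of u v] uv r \<eta> p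
        unfolding X_def Ww_def by (intro powr_mono2) auto
      finally have "C * WA u v powr (1/p) * Ww u v powr (\<eta>/p) \<le> C * WA u v powr (1/p) * X powr \<eta>"
        using C by (intro mult_left_mono) auto
      then show ?thesis using germ[of u v] uv r by linarith
    qed
    moreover have "dist (w v) (w u) \<le> norm (nyi_germ A w u v) + norm (w v - w u - nyi_germ A w u v)"
      unfolding dist_norm by (metis add.commute diff_add_cancel norm_triangle_ineq)
    ultimately have "dist (w v) (w u) \<le> WA u v powr (1/p) * B"
      unfolding B_def by (simp add: algebra_simps)
    then have "dist (w v) (w u) powr p \<le> (WA u v powr (1/p) * B) powr p"
      using p by (intro powr_mono2) auto
    also have "\<dots> = WA u v * B powr p"
      using pvariation_nonneg[OF fA, of u v] uv r p B unfolding WA_def by (simp add: powr_mult powr_powr)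
    finally show ?thesis .
  qed
  have "Ww a r \<le> WA a r * B powr p"
    unfolding Ww_def
  proof (rule pvariation_le_control[where \<omega> = "\<lambda>u v. WA u v * B powr p"])
    fix x y z assume "a \<le> x" "x \<le> y" "y \<le> z" "z \<le> r"
    then show "WA x y * B powr p + WA y z * B powr p \<le> WA x z * B powr p"
      using mult_right_mono[OF pvariation_superadditive[OF fA, of x y z], of "B powr p"] r
      unfolding WA_def by (simp add: distrib_right)
  next
    fix x y assume "a \<le> x" "x \<le> y" "y \<le> r"
    then show "dist (w y) (w x) powr p \<le> WA x y * B powr p" by (rule incr)
  qed (rule r(1))
  then have "X \<le> (WA a r * B powr p) powr (1/p)"
    using pvariation_nonneg[OF fw, of a r] r p unfolding X_def Ww_def by (intro powr_mono2) auto
  also have "\<dots> = WA a r powr (1/p) * B"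
    using pvariation_nonneg[OF fA, of a r] r p B unfolding WA_def by (simp add: powr_mult powr_powr)
  finally have "X \<le> WA a r powr (1/p) * B" .
  then show ?thesis
    using bootstrap_bound[of X "WA a r powr (1/p)" C \<eta>] C \<eta> small unfolding X_def B_def by simp
qed

lemma germ_estimate_small_interval:
  fixes A :: "real \<Rightarrow> 'a::euclidean_space \<Rightarrow> 'a" and w :: "real \<Rightarrow> 'a" and K \<eta> p :: real
  defines "WA \<equiv> pvariation (holder_dist K \<eta>) p A" and "C \<equiv> sewing_const (1/p + \<eta>/p)"
  assumes hA: "\<forall>t\<in>{a..b}. loc_holder \<eta> (A t)" and K: "K > 0" and \<eta>: "0 < \<eta>" "\<eta> \<le> 1"
    and p: "p > 0" "1/p + \<eta>/p > 1"
    and fA: "finite_pvar (holder_dist K \<eta>) p a b A" and smallA: "vanishes_near_diagonal WA a b"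
    and fw: "finite_pvar dist p a b w" and smallw: "vanishes_near_diagonal (pvariation dist p w) a b"
    and wK: "\<And>s. a \<le> s \<Longrightarrow> s \<le> b \<Longrightarrow> w s \<in> cball 0 K"
    and sol: "\<And>t. a \<le> t \<Longrightarrow> t \<le> b \<Longrightarrow> has_nyi A w a t (w t - w a)"
    and r: "a \<le> r" "r \<le> b" and small: "C * WA a r powr (1/p) \<le> 1/2"
  shows "norm (w r - w a - nyi_germ A w a r) \<le> C * WA a r powr (1/p) * ((2 + C) * WA a r powr (1/p)) powr \<eta>"
proof -
  have germ: "norm (w v - w u - nyi_germ A w u v) \<le> C * WA u v powr (1/p) * pvariation dist p w u v powr (\<eta>/p)"
    if "a \<le> u" "u \<le> v" "v \<le> b" for u v
    unfolding C_def WA_def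
    by (rule young_estimate[OF hA K \<eta>(1) p(1) p(1) p(2) fA smallA[unfolded WA_def] fw smallw wK sol that])
  have "pvariation dist p w a r powr (1/p) \<le> (2 + C) * WA a r powr (1/p)"
    unfolding WA_def using sewing_const_pos[OF p(2)] unfolding C_def[symmetric]
    by (rule apriori_pvariation_bound[OF hA K \<eta> p(1) _ fA fw wK germ[unfolded WA_def] r small[unfolded WA_def]])
  then have "(pvariation dist p w a r powr (1/p)) powr \<eta> \<le> ((2 + C) * WA a r powr (1/p)) powr \<eta>"
    using \<eta> by (intro powr_mono2) auto
  then have "pvariation dist p w a r powr (\<eta>/p) \<le> ((2 + C) * WA a r powr (1/p)) powr \<eta>"
    by (simp add: powr_powr)
  then have "C * WA a r powr (1/p) * pvariation dist p w a r powr (\<eta>/p)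
      \<le> C * WA a r powr (1/p) * ((2 + C) * WA a r powr (1/p)) powr \<eta>"
    using sewing_const_pos[OF p(2)] unfolding C_def[symmetric] by (intro mult_left_mono) auto
  then show ?thesis using germ[of a r] r by linarith
qed

section \<open>Uniqueness through the semiflow\<close>

lemma semiflow_refl: "is_semiflow p A \<Psi> \<Longrightarrow> 0 \<le> s \<Longrightarrow> s \<le> 1 \<Longrightarrow> \<Psi> s s x = x"
  using has_nyi_trivial[of A "\<lambda>r. \<Psi> s r x" s "\<Psi> s s x - x"] unfolding is_semiflow_def by auto

lemma semiflow_trajectory:
  assumes sf: "is_semiflow p A \<Psi>" and r: "0 \<le> r" "r \<le> b" "b \<le> 1" and p: "0 < p" "p < p'"
  shows "finite_pvar dist p' r b (\<lambda>s. \<Psi> r s x)"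
    and "vanishes_near_diagonal (pvariation dist p' (\<lambda>s. \<Psi> r s x)) r b"
    and "\<And>t. r \<le> t \<Longrightarrow> t \<le> b \<Longrightarrow> has_nyi A (\<lambda>s. \<Psi> r s x) r t (\<Psi> r t x - \<Psi> r r x)"
proof -
  have path: "pvar_path p r 1 (\<lambda>s. \<Psi> r s x)" and sol: "\<forall>t\<in>{r..1}. has_nyi A (\<lambda>s. \<Psi> r s x) r t (\<Psi> r t x - x)"
    using sf r unfolding is_semiflow_def by auto
  then have "pvar_path p r b (\<lambda>s. \<Psi> r s x)"
    using r finite_pvar_subinterval[of dist p r 1 _ r b] unfolding pvar_path_def
    by (auto intro: continuous_on_subset)
  then show "finite_pvar dist p' r b (\<lambda>s. \<Psi> r s x)"
    "vanishes_near_diagonal (pvariation dist p' (\<lambda>s. \<Psi> r s x)) r b"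
    using pvar_path_larger_exponent[OF _ p] r by auto
  show "has_nyi A (\<lambda>s. \<Psi> r s x) r t (\<Psi> r t x - \<Psi> r r x)" if "r \<le> t" "t \<le> b" for t
    using sol semiflow_refl[OF sf r(1)] that r by auto
qed

text \<open>Orbits are compared with the orbit of 0: by the flow property and the Hoelder bound,
  \<Psi>_{s\<rightarrow>u}(x) is close to \<Psi>_{s\<rightarrow>u}(\<Psi>_{0\<rightarrow>s}(0)) = \<Psi>_{0\<rightarrow>u}(0).\<close>

lemma semiflow_bounded:
  fixes \<Psi> :: "real \<Rightarrow> real \<Rightarrow> 'a::euclidean_space \<Rightarrow> 'a"
  assumes sf: "is_semiflow p A \<Psi>" and hol: "semiflow_loc_holder \<beta> \<Psi>" and \<beta>: "0 < \<beta>" and R: "0 \<le> R"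
  obtains K where "K > 0" "R \<le> K"
    "\<And>s u x. 0 \<le> s \<Longrightarrow> s \<le> u \<Longrightarrow> u \<le> 1 \<Longrightarrow> norm x \<le> R \<Longrightarrow> norm (\<Psi> s u x) \<le> K"
proof -
  have "continuous_on {0..1} (\<lambda>t. \<Psi> 0 t 0)" using sf unfolding is_semiflow_def pvar_path_def by auto
  then have "bounded ((\<lambda>t. \<Psi> 0 t 0) ` {0..1})" by (intro compact_imp_bounded compact_continuous_image) auto
  then obtain M0 where M0: "\<forall>u\<in>{0..1}. norm (\<Psi> 0 u 0) \<le> M0" unfolding bounded_iff by auto
  then have "norm (\<Psi> 0 0 0) \<le> M0" by simp
  then have M0_nonneg: "0 \<le> M0" using norm_ge_zero[of "\<Psi> 0 0 0"] by linarith
  define R' where "R' = max R M0"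
  obtain N where N: "\<forall>s t. 0 \<le> s \<and> s \<le> t \<and> t \<le> 1 \<longrightarrow>
      (\<forall>x\<in>cball 0 R'. \<forall>y\<in>cball 0 R'. norm (\<Psi> s t x - \<Psi> s t y) \<le> N * norm (x - y) powr \<beta>)"
    using hol unfolding semiflow_loc_holder_def by blast
  define K where "K = M0 + \<bar>N\<bar> * (2 * R') powr \<beta> + R + 1"
  have "norm (\<Psi> s u x) \<le> K" if su: "0 \<le> s" "s \<le> u" "u \<le> 1" and x: "norm x \<le> R" for s u x
  proof -
    have "\<forall>s r t. 0 \<le> s \<and> s \<le> r \<and> r \<le> t \<and> t \<le> 1 \<longrightarrow> \<Psi> s t = \<Psi> r t \<circ> \<Psi> s r"
      using sf unfolding is_semiflow_def by blast
    then have "\<Psi> 0 u = \<Psi> s u \<circ> \<Psi> 0 s" using su by simp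
    then have orbit: "\<Psi> 0 u 0 = \<Psi> s u (\<Psi> 0 s 0)" by simp
    have "norm (\<Psi> 0 s 0) \<le> M0" using M0 su by auto
    then have xs: "x \<in> cball 0 R'" "\<Psi> 0 s 0 \<in> cball 0 R'" using x unfolding R'_def by auto
    have "norm (x - \<Psi> 0 s 0) \<le> 2 * R'" using norm_triangle_ineq4[of x "\<Psi> 0 s 0"] xs by simp
    then have "\<bar>N\<bar> * norm (x - \<Psi> 0 s 0) powr \<beta> \<le> \<bar>N\<bar> * (2 * R') powr \<beta>"
      using \<beta> by (intro mult_left_mono powr_mono2) auto
    moreover have "norm (\<Psi> s u x - \<Psi> s u (\<Psi> 0 s 0)) \<le> N * norm (x - \<Psi> 0 s 0) powr \<beta>"
      using N su xs by blast
    moreover have "N * norm (x - \<Psi> 0 s 0) powr \<beta> \<le> \<bar>N\<bar> * norm (x - \<Psi> 0 s 0) powr \<beta>"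
      by (intro mult_right_mono) auto
    ultimately have "norm (\<Psi> s u x - \<Psi> 0 u 0) \<le> \<bar>N\<bar> * (2 * R') powr \<beta>"
      unfolding orbit by linarith
    moreover have "norm (\<Psi> 0 u 0) \<le> M0" using M0 su by auto
    ultimately show ?thesis using norm_triangle_sub[of "\<Psi> s u x" "\<Psi> 0 u 0"] R unfolding K_def by linarith
  qed
  moreover have "K > 0" "R \<le> K" unfolding K_def using R M0_nonneg by (auto intro!: add_nonneg_pos)
  ultimately show ?thesis using that by blast
qed

lemma exists_larger_exponents:
  fixes p \<zeta> \<eta> :: real
  assumes "0 < \<eta>" "1 \<le> p" "1 \<le> \<zeta>" "(1 + \<eta>) / p > 1" "1/p + \<eta>/\<zeta> > 1"
  obtains p' \<zeta>' where "p < p'" "\<zeta> < \<zeta>'" "1/p' + \<eta>/\<zeta>' > 1" "1/p' + \<eta>/p' > 1"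
proof -
  have "((\<lambda>e. 1/(p+e) + \<eta>/(\<zeta>+e)) \<longlongrightarrow> 1/(p+0) + \<eta>/(\<zeta>+0)) (at_right 0)"
    using assms by (intro tendsto_intros) auto
  then have "\<forall>\<^sub>F e in at_right 0. 1 < 1/(p+e) + \<eta>/(\<zeta>+e)"
    using assms(5) by (intro order_tendstoD(1)) auto
  moreover have "((\<lambda>e. 1/(p+e) + \<eta>/(p+e)) \<longlongrightarrow> 1/(p+0) + \<eta>/(p+0)) (at_right 0)"
    using assms by (intro tendsto_intros) auto
  then have "\<forall>\<^sub>F e in at_right 0. 1 < 1/(p+e) + \<eta>/(p+e)"
    using assms(4) by (intro order_tendstoD(1)) (auto simp: add_divide_distrib)
  ultimately have "\<forall>\<^sub>F e in at_right 0. 1 < 1/(p+e) + \<eta>/(\<zeta>+e) \<and> 1 < 1/(p+e) + \<eta>/(p+e)"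
    by (rule eventually_conj)
  then obtain b :: real where "b > 0" "\<forall>e>0. e < b \<longrightarrow> 1 < 1/(p+e) + \<eta>/(\<zeta>+e) \<and> 1 < 1/(p+e) + \<eta>/(p+e)"
    unfolding eventually_at_right_field by auto
  then show ?thesis using that[of "p + b/2" "\<zeta> + b/2"] by auto
qed

lemma exists_exponent_below_one:
  fixes \<theta>1 \<theta>2 :: real
  assumes "\<theta>1 > 1" "\<theta>2 > 1"
  obtains \<beta> where "0 < \<beta>" "\<beta> < 1" "\<beta> * \<theta>1 > 1" "\<beta> * \<theta>2 > 1"
proof -
  define m where "m = max (1/\<theta>1) (1/\<theta>2)"
  have "0 < 1/\<theta>1" "1/\<theta>1 < 1" "1/\<theta>2 < 1" using assms by auto
  moreover have "1/\<theta>1 \<le> m" "1/\<theta>2 \<le> m" unfolding m_def by simp_all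
  moreover have "m < 1" unfolding m_def using \<open>1/\<theta>1 < 1\<close> \<open>1/\<theta>2 < 1\<close> by simp
  ultimately have "1/\<theta>1 \<le> m" "1/\<theta>2 \<le> m" "0 < m" "m < 1" by linarith+
  define \<beta> where "\<beta> = (1 + m) / 2"
  have "1/\<theta>1 < \<beta>" "1/\<theta>2 < \<beta>" "0 < \<beta>" "\<beta> < 1"
    unfolding \<beta>_def using \<open>1/\<theta>1 \<le> m\<close> \<open>1/\<theta>2 \<le> m\<close> \<open>0 < m\<close> \<open>m < 1\<close> by auto
  then show ?thesis using that[of \<beta>] assms by (simp add: field_simps)
qed

lemma powr_add_le:
  fixes x y \<beta> :: real
  assumes "0 \<le> x" "0 \<le> y" "0 < \<beta>" "\<beta> \<le> 1"
  shows "(x + y) powr \<beta> \<le> x powr \<beta> + y powr \<beta>"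
proof (cases "x + y = 0")
  case False
  then have s: "x + y > 0" using assms by simp
  have k: "z * (x + y) powr (\<beta> - 1) \<le> z powr \<beta>" if "0 \<le> z" "z \<le> x + y" for z
  proof (cases "z = 0")
    case False
    then have "(x + y) powr (\<beta> - 1) \<le> z powr (\<beta> - 1)" using that assms by (intro powr_mono2') auto
    then have "z * (x + y) powr (\<beta> - 1) \<le> z * z powr (\<beta> - 1)" using that by (intro mult_left_mono) auto
    also have "\<dots> = z powr \<beta>" using that False by (simp add: powr_mult_base)
    finally show ?thesis .
  qed simp
  have "(x + y) powr \<beta> = x * (x + y) powr (\<beta> - 1) + y * (x + y) powr (\<beta> - 1)"
    using s by (simp add: powr_mult_base distrib_right[symmetric])
  also have "\<dots> \<le> x powr \<beta> + y powr \<beta>" using k[of x] k[of y] assms by (intro add_mono) auto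
  finally show ?thesis .
qed (use assms in simp)

lemma powr_le_powr_minus_one_mult:
  fixes x \<epsilon> \<gamma> :: real
  assumes "0 \<le> x" "x \<le> \<epsilon>" "\<gamma> \<ge> 1"
  shows "x powr \<gamma> \<le> \<epsilon> powr (\<gamma> - 1) * x"
  using powr_eq_powr_minus_one_mult[OF assms(1), of \<gamma>] assms by (simp add: mult_right_mono powr_mono2)

lemma defect_powr_bound:
  fixes a b C1 C2 p \<zeta> \<eta> \<beta> \<epsilon> :: real
  assumes ab: "0 \<le> a" "0 \<le> b" "a \<le> \<epsilon>" "b \<le> \<epsilon>" and pos: "p > 0" "\<zeta> > 0" "\<eta> > 0" "0 < \<beta>" "\<beta> \<le> 1"
    and C: "C1 \<ge> 0" "C2 \<ge> 0"
    and \<beta>1: "\<beta> * (1/p + \<eta>/\<zeta>) > 1" and \<beta>2: "\<beta> * (1/p + \<eta>/p) > 1"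
  shows "(C1 * a powr (1/p) * b powr (\<eta>/\<zeta>) + C2 * a powr (1/p) * ((2 + C2) * a powr (1/p)) powr \<eta>) powr \<beta>
     \<le> (C1 powr \<beta> * (2*\<epsilon>) powr (\<beta> * (1/p + \<eta>/\<zeta>) - 1)
        + (C2 * (2 + C2) powr \<eta>) powr \<beta> * \<epsilon> powr (\<beta> * (1/p + \<eta>/p) - 1)) * (a + b)"
proof -
  define X where "X = C1 * (a + b) powr (1/p + \<eta>/\<zeta>)"
  define Y where "Y = C2 * (2 + C2) powr \<eta> * a powr (1/p + \<eta>/p)"
  have XY: "0 \<le> X" "0 \<le> Y" unfolding X_def Y_def using C by auto
  have "a powr (1/p) * b powr (\<eta>/\<zeta>) \<le> (a + b) powr (1/p) * (a + b) powr (\<eta>/\<zeta>)"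
    using ab pos by (intro mult_mono powr_mono2) auto
  then have "C1 * a powr (1/p) * b powr (\<eta>/\<zeta>) \<le> C1 * ((a + b) powr (1/p) * (a + b) powr (\<eta>/\<zeta>))"
    using C by (simp add: mult.assoc mult_left_mono)
  moreover have "C2 * a powr (1/p) * ((2 + C2) * a powr (1/p)) powr \<eta> = Y"
    unfolding Y_def using C by (simp add: powr_mult powr_powr powr_add)
  ultimately have "(C1 * a powr (1/p) * b powr (\<eta>/\<zeta>) + C2 * a powr (1/p) * ((2 + C2) * a powr (1/p)) powr \<eta>) powr \<beta>
      \<le> (X + Y) powr \<beta>"
    unfolding X_def using pos ab C by (intro powr_mono2) (auto simp: powr_add)
  also have "\<dots> \<le> X powr \<beta> + Y powr \<beta>" using XY pos by (intro powr_add_le) auto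
  finally have sum: "(C1 * a powr (1/p) * b powr (\<eta>/\<zeta>) + C2 * a powr (1/p) * ((2 + C2) * a powr (1/p)) powr \<eta>) powr \<beta>
      \<le> X powr \<beta> + Y powr \<beta>" .
  have "X powr \<beta> = C1 powr \<beta> * (a + b) powr (\<beta> * (1/p + \<eta>/\<zeta>))"
    unfolding X_def using C ab by (simp add: powr_mult powr_powr mult.commute)
  also have "\<dots> \<le> C1 powr \<beta> * ((2*\<epsilon>) powr (\<beta> * (1/p + \<eta>/\<zeta>) - 1) * (a + b))"
    using ab \<beta>1 by (intro mult_left_mono powr_le_powr_minus_one_mult) auto
  finally have X: "X powr \<beta> \<le> C1 powr \<beta> * ((2*\<epsilon>) powr (\<beta> * (1/p + \<eta>/\<zeta>) - 1) * (a + b))" .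
  have "Y powr \<beta> = (C2 * (2 + C2) powr \<eta>) powr \<beta> * a powr (\<beta> * (1/p + \<eta>/p))"
    unfolding Y_def using C ab by (simp add: powr_mult powr_powr mult.commute)
  also have "\<dots> \<le> (C2 * (2 + C2) powr \<eta>) powr \<beta> * (\<epsilon> powr (\<beta> * (1/p + \<eta>/p) - 1) * a)"
    using ab \<beta>2 by (intro mult_left_mono powr_le_powr_minus_one_mult) auto
  also have "\<dots> \<le> (C2 * (2 + C2) powr \<eta>) powr \<beta> * (\<epsilon> powr (\<beta> * (1/p + \<eta>/p) - 1) * (a + b))"
    using ab by (intro mult_left_mono) auto
  finally have Y: "Y powr \<beta> \<le> (C2 * (2 + C2) powr \<eta>) powr \<beta> * (\<epsilon> powr (\<beta> * (1/p + \<eta>/p) - 1) * (a + b))" .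
  show ?thesis using sum X Y by (simp add: algebra_simps)
qed

lemma tendsto_powr_at_right_zero:
  fixes c \<gamma> :: real
  assumes "0 \<le> c" "0 < \<gamma>"
  shows "((\<lambda>x. (c * x) powr \<gamma>) \<longlongrightarrow> 0) (at_right 0)"
proof (rule tendsto_zero_powrI)
  show "((\<lambda>x. c * x) \<longlongrightarrow> 0) (at_right 0)" by (intro tendsto_mult_right_zero tendsto_ident_at)
  show "\<forall>\<^sub>F x in at_right 0. 0 \<le> c * x"
    using eventually_at_right_less[of "0::real"] assms(1) by (auto elim: eventually_mono)
qed (use assms in auto)

lemma defect_powr_vanishes:
  fixes W1 W2 D :: "real \<Rightarrow> real \<Rightarrow> real"
  assumes pos: "p > 0" "\<zeta> > 0" "\<eta> > 0" "0 < \<beta>" "\<beta> \<le> 1" and C: "C1 \<ge> 0" "C2 > 0"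
    and \<beta>1: "\<beta> * (1/p + \<eta>/\<zeta>) > 1" and \<beta>2: "\<beta> * (1/p + \<eta>/p) > 1"
    and small: "vanishes_near_diagonal (\<lambda>u v. max (W1 u v) (W2 u v)) a b"
    and nonneg: "\<And>u v. a \<le> u \<Longrightarrow> u \<le> v \<Longrightarrow> v \<le> b \<Longrightarrow> 0 \<le> W1 u v \<and> 0 \<le> W2 u v \<and> 0 \<le> D u v"
    and bound: "\<And>u v. a \<le> u \<Longrightarrow> u \<le> v \<Longrightarrow> v \<le> b \<Longrightarrow> C2 * W1 u v powr (1/p) \<le> 1/2 \<Longrightarrow>
        D u v \<le> C1 * W1 u v powr (1/p) * W2 u v powr (\<eta>/\<zeta>)
          + C2 * W1 u v powr (1/p) * ((2 + C2) * W1 u v powr (1/p)) powr \<eta>"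
    and \<epsilon>: "\<epsilon> > 0"
  shows "\<exists>\<delta>>0. \<forall>u v. a \<le> u \<and> u \<le> v \<and> v \<le> b \<and> v - u < \<delta> \<longrightarrow> D u v powr \<beta> \<le> \<epsilon> * (W1 u v + W2 u v)"
proof -
  define k where "k x = C1 powr \<beta> * (2*x) powr (\<beta> * (1/p + \<eta>/\<zeta>) - 1)
    + (C2 * (2 + C2) powr \<eta>) powr \<beta> * x powr (\<beta> * (1/p + \<eta>/p) - 1)" for x
  have powr_lim: "((\<lambda>x. x powr \<gamma>) \<longlongrightarrow> 0) (at_right 0)" if "\<gamma> > 0" for \<gamma> :: real
    using tendsto_powr_at_right_zero[of 1 \<gamma>] that by simp
  have "(k \<longlongrightarrow> C1 powr \<beta> * 0 + (C2 * (2 + C2) powr \<eta>) powr \<beta> * 0) (at_right 0)"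
    unfolding k_def using \<beta>1 \<beta>2 by (intro tendsto_intros tendsto_powr_at_right_zero powr_lim) auto
  then have "\<forall>\<^sub>F x in at_right 0. k x < \<epsilon>" using \<epsilon> by (intro order_tendstoD(2)) auto
  moreover have "((\<lambda>x. C2 * x powr (1/p)) \<longlongrightarrow> C2 * 0) (at_right 0)"
    using pos by (intro tendsto_intros powr_lim) auto
  then have "\<forall>\<^sub>F x in at_right 0. C2 * x powr (1/p) < 1/2" by (intro order_tendstoD(2)) auto
  ultimately have "\<forall>\<^sub>F x in at_right 0. k x < \<epsilon> \<and> C2 * x powr (1/p) < 1/2" by (rule eventually_conj)
  then obtain c :: real where "c > 0" "\<forall>x>0. x < c \<longrightarrow> k x < \<epsilon> \<and> C2 * x powr (1/p) < 1/2"
    unfolding eventually_at_right_field by auto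
  then obtain x where x: "0 < x" "k x < \<epsilon>" "C2 * x powr (1/p) < 1/2"
    using field_lbound_gt_zero[of c c] by auto
  obtain \<delta> where \<delta>: "\<delta> > 0" "\<forall>u v. a \<le> u \<and> u \<le> v \<and> v \<le> b \<and> v - u < \<delta> \<longrightarrow> max (W1 u v) (W2 u v) \<le> x"
    using small x(1) unfolding vanishes_near_diagonal_def by blast
  have "D u v powr \<beta> \<le> \<epsilon> * (W1 u v + W2 u v)" if uv: "a \<le> u" "u \<le> v" "v \<le> b" "v - u < \<delta>" for u v
  proof -
    have W: "0 \<le> W1 u v" "0 \<le> W2 u v" "W1 u v \<le> x" "W2 u v \<le> x" "0 \<le> D u v"
      using nonneg[OF uv(1-3)] \<delta>(2) uv by auto
    then have "C2 * W1 u v powr (1/p) \<le> C2 * x powr (1/p)"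
      using C pos by (intro mult_left_mono powr_mono2) auto
    then have "D u v powr \<beta> \<le> (C1 * W1 u v powr (1/p) * W2 u v powr (\<eta>/\<zeta>)
          + C2 * W1 u v powr (1/p) * ((2 + C2) * W1 u v powr (1/p)) powr \<eta>) powr \<beta>"
      using bound[OF uv(1-3)] x(3) W pos by (intro powr_mono2) auto
    also have "\<dots> \<le> k x * (W1 u v + W2 u v)"
      unfolding k_def using defect_powr_bound[OF W(1-4) pos C(1) less_imp_le[OF C(2)] \<beta>1 \<beta>2] by simp
    also have "\<dots> \<le> \<epsilon> * (W1 u v + W2 u v)" using x(2) W by (intro mult_right_mono) auto
    finally show ?thesis .
  qed
  then show ?thesis using \<delta>(1) by blast
qed

lemma flow_telescoping:
  fixes \<Psi> :: "real \<Rightarrow> real \<Rightarrow> 'a::real_normed_vector \<Rightarrow> 'a" and z :: "real \<Rightarrow> 'a"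
  assumes St: "S \<le> t"
    and flow: "\<And>s r. S \<le> s \<Longrightarrow> s \<le> r \<Longrightarrow> r \<le> t \<Longrightarrow> \<Psi> s t = \<Psi> r t \<circ> \<Psi> s r"
    and endpoint: "\<Psi> t t (z t) = z t"
    and holder: "\<And>s x y. S \<le> s \<Longrightarrow> s \<le> t \<Longrightarrow> x \<in> B \<Longrightarrow> y \<in> B \<Longrightarrow>
        norm (\<Psi> s t x - \<Psi> s t y) \<le> N * norm (x - y) powr \<beta>"
    and zB: "\<And>s. S \<le> s \<Longrightarrow> s \<le> t \<Longrightarrow> z s \<in> B"
    and \<Psi>B: "\<And>s r. S \<le> s \<Longrightarrow> s \<le> r \<Longrightarrow> r \<le> t \<Longrightarrow> \<Psi> s r (z s) \<in> B"
    and N: "0 \<le> N"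
    and \<omega>_nonneg: "\<And>u v. S \<le> u \<Longrightarrow> u \<le> v \<Longrightarrow> v \<le> t \<Longrightarrow> 0 \<le> \<omega> u v"
    and \<omega>_superadditive: "\<And>u m v. S \<le> u \<Longrightarrow> u \<le> m \<Longrightarrow> m \<le> v \<Longrightarrow> v \<le> t \<Longrightarrow> \<omega> u m + \<omega> m v \<le> \<omega> u v"
    and defect: "\<And>\<epsilon>. \<epsilon> > 0 \<Longrightarrow> \<exists>\<delta>>0. \<forall>r r'. S \<le> r \<and> r \<le> r' \<and> r' \<le> t \<and> r' - r < \<delta> \<longrightarrow>
        norm (z r' - \<Psi> r r' (z r)) powr \<beta> \<le> \<epsilon> * \<omega> r r'"
  shows "z t = \<Psi> S t (z S)"
proof -
  have "norm (z t - \<Psi> S t (z S)) \<le> e" if e: "e > 0" for e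
  proof -
    define \<epsilon> where "\<epsilon> = e / (N * \<omega> S t + 1)"
    have "0 \<le> N * \<omega> S t" using N \<omega>_nonneg[of S t] St by simp
    then have den: "N * \<omega> S t + 1 > 0" by linarith
    then have \<epsilon>: "\<epsilon> > 0" "N * \<epsilon> * \<omega> S t \<le> e"
      unfolding \<epsilon>_def using e N \<omega>_nonneg[of S t] St by (auto simp: field_simps)
    obtain \<delta> where \<delta>: "\<delta> > 0" "\<forall>r r'. S \<le> r \<and> r \<le> r' \<and> r' \<le> t \<and> r' - r < \<delta> \<longrightarrow>
        norm (z r' - \<Psi> r r' (z r)) powr \<beta> \<le> \<epsilon> * \<omega> r r'"
      using defect[OF \<epsilon>(1)] by blast
    have "(\<lambda>n. (t - S) / 2 ^ n) \<longlonglongrightarrow> 0" by (intro LIMSEQ_divide_realpow_zero) simp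
    then have "\<forall>\<^sub>F n in sequentially. (t - S) / 2 ^ n < \<delta>" using \<delta>(1) by (rule order_tendstoD)
    then obtain n where n: "(t - S) / 2 ^ n < \<delta>" unfolding eventually_sequentially by auto
    define r where "r j = dyadic_point S t n j" for j
    define g where "g j = \<Psi> (r j) t (z (r j))" for j
    have r: "S \<le> r j" "r j \<le> r (Suc j)" "r (Suc j) \<le> t" "r (Suc j) - r j < \<delta>" if "j < 2^n" for j
      using dyadic_point_in[OF St, of j n] dyadic_point_in[OF St, of "Suc j" n] that
        dyadic_point_mono[OF St] dyadic_point_step[of S t n j] n unfolding r_def by auto
    have step: "norm (g (Suc j) - g j) \<le> N * \<epsilon> * \<omega> (r j) (r (Suc j))" if j: "j < 2^n" for j
    proof -
      have gj: "g j = \<Psi> (r (Suc j)) t (\<Psi> (r j) (r (Suc j)) (z (r j)))"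
        unfolding g_def using flow[of "r j" "r (Suc j)"] r[OF j] by simp
      have "norm (g (Suc j) - g j) \<le> N * norm (z (r (Suc j)) - \<Psi> (r j) (r (Suc j)) (z (r j))) powr \<beta>"
        unfolding gj unfolding g_def using r[OF j] by (intro holder zB \<Psi>B) auto
      also have "\<dots> \<le> N * (\<epsilon> * \<omega> (r j) (r (Suc j)))"
        using \<delta>(2) r[OF j] N by (intro mult_left_mono) auto
      finally show ?thesis by (simp add: mult.assoc)
    qed
    have "(\<Sum>j<2^n. g (Suc j) - g j) = g (2^n) - g 0" by (rule sum_lessThan_telescope)
    moreover have "g (2^n) = z t" "g 0 = \<Psi> S t (z S)" unfolding g_def r_def using endpoint by simp_all
    ultimately have "z t - \<Psi> S t (z S) = (\<Sum>j<2^n. g (Suc j) - g j)" by simp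
    then have "norm (z t - \<Psi> S t (z S)) \<le> (\<Sum>j<2^n. norm (g (Suc j) - g j))"
      by (simp add: norm_sum)
    also have "\<dots> \<le> (\<Sum>j<2^n. N * \<epsilon> * \<omega> (r j) (r (Suc j)))"
      using step by (intro sum_mono) auto
    also have "\<dots> = N * \<epsilon> * (\<Sum>j<2^n. \<omega> (r j) (r (Suc j)))" by (simp add: sum_distrib_left)
    also have "\<dots> \<le> N * \<epsilon> * \<omega> S t"
    proof (intro mult_left_mono sum_le_superadditive[OF \<omega>_superadditive])
      show "\<forall>i<2^n. r i \<le> r (Suc i)" using r by blast
    qed (use N \<epsilon> \<omega>_nonneg St in \<open>auto simp: r_def\<close>)
    finally show ?thesis using \<epsilon>(2) by linarith
  qed
  then show ?thesis using field_le_epsilon[of "norm (z t - \<Psi> S t (z S))" 0] by simp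
qed

lemma solutions_close_small_interval:
  fixes A :: "real \<Rightarrow> 'a::euclidean_space \<Rightarrow> 'a" and z w :: "real \<Rightarrow> 'a" and K \<eta> p \<zeta> :: real
  defines "WA \<equiv> pvariation (holder_dist K \<eta>) p A" and "C2 \<equiv> sewing_const (1/p + \<eta>/p)"
  assumes hA: "\<forall>t\<in>{a..b}. loc_holder \<eta> (A t)" and K: "K > 0" and \<eta>: "0 < \<eta>" "\<eta> \<le> 1"
    and exps: "p > 0" "\<zeta> > 0" "1/p + \<eta>/\<zeta> > 1" "1/p + \<eta>/p > 1"
    and fA: "finite_pvar (holder_dist K \<eta>) p a b A" and smallA: "vanishes_near_diagonal WA a b"
    and fz: "finite_pvar dist \<zeta> a b z" and smallz: "vanishes_near_diagonal (pvariation dist \<zeta> z) a b"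
    and zK: "\<And>s. a \<le> s \<Longrightarrow> s \<le> b \<Longrightarrow> z s \<in> cball 0 K"
    and solz: "\<And>t. a \<le> t \<Longrightarrow> t \<le> b \<Longrightarrow> has_nyi A z a t (z t - z a)"
    and r: "a \<le> r" "r \<le> r'" "r' \<le> b"
    and fw: "finite_pvar dist p r b w" and smallw: "vanishes_near_diagonal (pvariation dist p w) r b"
    and wK: "\<And>s. r \<le> s \<Longrightarrow> s \<le> b \<Longrightarrow> w s \<in> cball 0 K"
    and solw: "\<And>t. r \<le> t \<Longrightarrow> t \<le> b \<Longrightarrow> has_nyi A w r t (w t - w r)"
    and start: "w r = z r" and small: "C2 * WA r r' powr (1/p) \<le> 1/2"
  shows "norm (z r' - w r') \<le> sewing_const (1/p + \<eta>/\<zeta>) * WA r r' powr (1/p) * pvariation dist \<zeta> z r r' powr (\<eta>/\<zeta>)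
    + C2 * WA r r' powr (1/p) * ((2 + C2) * WA r r' powr (1/p)) powr \<eta>"
proof -
  have "norm (z r' - z r - nyi_germ A z r r') \<le>
      sewing_const (1/p + \<eta>/\<zeta>) * WA r r' powr (1/p) * pvariation dist \<zeta> z r r' powr (\<eta>/\<zeta>)"
    unfolding WA_def using young_estimate[OF hA K \<eta>(1) exps(1-3) fA smallA[unfolded WA_def] fz smallz zK solz r(1,2)]
      r by simp
  moreover have "norm (w r' - w r - nyi_germ A w r r') \<le> C2 * WA r r' powr (1/p) * ((2 + C2) * WA r r' powr (1/p)) powr \<eta>"
    unfolding C2_def WA_def
  proof (rule germ_estimate_small_interval[OF _ K \<eta> exps(1,4) _ _ fw smallw wK solw])
    show "\<forall>t\<in>{r..b}. loc_holder \<eta> (A t)" using hA r by auto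
    show "finite_pvar (holder_dist K \<eta>) p r b A" using finite_pvar_subinterval[OF fA] r by auto
    show "vanishes_near_diagonal (pvariation (holder_dist K \<eta>) p A) r b"
      using vanishes_near_diagonal_subinterval[OF smallA] r unfolding WA_def by auto
  qed (use r small in \<open>auto simp: C2_def WA_def\<close>)
  moreover have "z r' - w r' = (z r' - z r - nyi_germ A z r r') - (w r' - w r - nyi_germ A w r r')"
    using start by (simp add: nyi_germ_def)
  then have "norm (z r' - w r') \<le> norm (z r' - z r - nyi_germ A z r r') + norm (w r' - w r - nyi_germ A w r r')"
    by (simp only: norm_triangle_ineq4)
  ultimately show ?thesis by linarith
qed

lemma nyi_solution_eq_semiflow:
  fixes A :: "real \<Rightarrow> 'a::euclidean_space \<Rightarrow> 'a" and \<Psi> :: "real \<Rightarrow> real \<Rightarrow> 'a \<Rightarrow> 'a" and z :: "real \<Rightarrow> 'a"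
    and K \<eta> p p' \<zeta>' \<beta> :: real
  defines "WA \<equiv> pvariation (holder_dist K \<eta>) p' A" and "Wz \<equiv> pvariation dist \<zeta>' z"
  assumes \<eta>: "0 < \<eta>" "\<eta> \<le> 1" and sf: "is_semiflow p A \<Psi>" and St: "0 \<le> S" "S \<le> t" "t \<le> 1"
    and exps: "0 < p" "p < p'" "\<zeta>' > 0" "\<beta> * (1/p' + \<eta>/\<zeta>') > 1" "\<beta> * (1/p' + \<eta>/p') > 1"
    and \<beta>: "0 < \<beta>" "\<beta> < 1" and K: "K > 0"
    and hA: "\<forall>s\<in>{S..t}. loc_holder \<eta> (A s)"
    and fA: "finite_pvar (holder_dist K \<eta>) p' S t A" and smallA: "vanishes_near_diagonal WA S t"
    and fz: "finite_pvar dist \<zeta>' S t z" and smallz: "vanishes_near_diagonal Wz S t"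
    and solz: "\<And>s. S \<le> s \<Longrightarrow> s \<le> t \<Longrightarrow> has_nyi A z S s (z s - z S)"
    and bounded: "\<And>s u. S \<le> s \<Longrightarrow> s \<le> u \<Longrightarrow> u \<le> t \<Longrightarrow> z s \<in> cball 0 K \<and> \<Psi> s u (z s) \<in> cball 0 K"
    and holder: "\<And>s x x'. S \<le> s \<Longrightarrow> s \<le> t \<Longrightarrow> x \<in> cball 0 K \<Longrightarrow> x' \<in> cball 0 K \<Longrightarrow>
        norm (\<Psi> s t x - \<Psi> s t x') \<le> N * norm (x - x') powr \<beta>"
  shows "z t = \<Psi> S t (z S)"
proof -
  define C1 where "C1 = sewing_const (1/p' + \<eta>/\<zeta>')"
  define C2 where "C2 = sewing_const (1/p' + \<eta>/p')"
  have "0 \<le> 1/p' + \<eta>/\<zeta>'" "0 \<le> 1/p' + \<eta>/p'" using exps \<eta> by auto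
  then have "\<beta> * (1/p' + \<eta>/\<zeta>') \<le> 1/p' + \<eta>/\<zeta>'" "\<beta> * (1/p' + \<eta>/p') \<le> 1/p' + \<eta>/p'"
    using \<beta> by (auto intro: mult_left_le_one_le)
  then have \<theta>: "1/p' + \<eta>/\<zeta>' > 1" "1/p' + \<eta>/p' > 1" using exps by linarith+
  have WA_nonneg: "0 \<le> WA u v" and Wz_nonneg: "0 \<le> Wz u v" if "S \<le> u" "u \<le> v" "v \<le> t" for u v
    unfolding WA_def Wz_def using that fA fz by (auto intro: pvariation_nonneg)
  have defect: "norm (z r' - \<Psi> r r' (z r)) \<le> C1 * WA r r' powr (1/p') * Wz r r' powr (\<eta>/\<zeta>')
      + C2 * WA r r' powr (1/p') * ((2 + C2) * WA r r' powr (1/p')) powr \<eta>"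
    if r: "S \<le> r" "r \<le> r'" "r' \<le> t" "C2 * WA r r' powr (1/p') \<le> 1/2" for r r'
    unfolding C1_def C2_def WA_def Wz_def
  proof (rule solutions_close_small_interval[OF hA K \<eta> _ exps(3) \<theta> fA smallA[unfolded WA_def] fz
        smallz[unfolded Wz_def] _ solz r(1-3) semiflow_trajectory(1,2)[OF sf _ _ St(3) exps(1,2)]])
    show "\<And>s. r \<le> s \<Longrightarrow> s \<le> t \<Longrightarrow> \<Psi> r s (z r) \<in> cball 0 K" using bounded r by auto
    show "\<And>s. r \<le> s \<Longrightarrow> s \<le> t \<Longrightarrow> has_nyi A (\<lambda>s. \<Psi> r s (z r)) r s (\<Psi> r s (z r) - \<Psi> r r (z r))"
      using semiflow_trajectory(3)[OF sf _ _ St(3) exps(1,2)] r St by auto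
    show "\<Psi> r r (z r) = z r" using semiflow_refl[OF sf] r St by auto
  qed (use r St bounded exps \<open>C2 * WA r r' powr (1/p') \<le> 1/2\<close> in \<open>auto simp: C2_def WA_def\<close>)
  show ?thesis
  proof (rule flow_telescoping[where B = "cball 0 K" and N = "\<bar>N\<bar>" and \<beta> = \<beta> and \<omega> = "\<lambda>u v. WA u v + Wz u v"])
    show "\<Psi> s t = \<Psi> r t \<circ> \<Psi> s r" if "S \<le> s" "s \<le> r" "r \<le> t" for s r
      using sf that St unfolding is_semiflow_def by auto
    show "\<Psi> t t (z t) = z t" using semiflow_refl[OF sf] St by auto
    show "norm (\<Psi> s t x - \<Psi> s t x') \<le> \<bar>N\<bar> * norm (x - x') powr \<beta>"
      if "S \<le> s" "s \<le> t" "x \<in> cball 0 K" "x' \<in> cball 0 K" for s x x'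
      using holder[OF that] by (meson abs_ge_self mult_right_mono order_trans powr_ge_zero)
    show "WA u m + Wz u m + (WA m v + Wz m v) \<le> WA u v + Wz u v"
      if "S \<le> u" "u \<le> m" "m \<le> v" "v \<le> t" for u m v
      using pvariation_superadditive[OF fA that] pvariation_superadditive[OF fz that]
      unfolding WA_def Wz_def by simp
    show "\<exists>\<delta>>0. \<forall>r r'. S \<le> r \<and> r \<le> r' \<and> r' \<le> t \<and> r' - r < \<delta> \<longrightarrow>
        norm (z r' - \<Psi> r r' (z r)) powr \<beta> \<le> \<epsilon> * (WA r r' + Wz r r')" if "\<epsilon> > 0" for \<epsilon>
    proof (rule defect_powr_vanishes[OF _ exps(3) \<eta>(1) \<beta>(1) _ _ _ exps(4,5) vanishes_near_diagonal_max[OF smallA smallz]])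
      show "0 \<le> C1" "0 < C2"
        unfolding C1_def C2_def using sewing_const_pos[OF \<theta>(1)] sewing_const_pos[OF \<theta>(2)] by auto
    qed (use that exps \<beta> WA_nonneg Wz_nonneg defect in auto)
  qed (use St bounded WA_nonneg Wz_nonneg in auto)
qed

lemma nyi_solution_unique:
  fixes A :: "real \<Rightarrow> 'a::euclidean_space \<Rightarrow> 'a" and \<Psi> :: "real \<Rightarrow> real \<Rightarrow> 'a \<Rightarrow> 'a"
  assumes \<eta>: "0 < \<eta>" "\<eta> \<le> 1" and p: "1 \<le> p" "(1 + \<eta>) / p > 1"
    and A: "pvar_field p \<eta> A" and sf: "is_semiflow p A \<Psi>"
    and hol: "\<forall>\<beta>. 0 < \<beta> \<and> \<beta> < 1 \<longrightarrow> semiflow_loc_holder \<beta> \<Psi>"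
    and ST: "0 \<le> S" "T \<le> 1" and sol: "is_nyi_solution p \<eta> A S T y z" and t: "S \<le> t" "t \<le> T"
  shows "z t = \<Psi> S t y"
proof -
  obtain \<zeta> where \<zeta>: "\<zeta> \<ge> 1" "1/p + \<eta>/\<zeta> > 1" "pvar_path \<zeta> S T z"
    and solz: "\<forall>s\<in>{S..T}. has_nyi A z S s (z s - y)"
    using sol unfolding is_nyi_solution_def by blast
  have zS: "z S = y" using solz t has_nyi_trivial[of A z S "z S - y"] by auto
  obtain p' \<zeta>' where exps: "p < p'" "\<zeta> < \<zeta>'" "1/p' + \<eta>/\<zeta>' > 1" "1/p' + \<eta>/p' > 1"
    using exists_larger_exponents[OF \<eta>(1) p(1) \<zeta>(1) p(2) \<zeta>(2)] by blast
  obtain \<beta> where \<beta>: "0 < \<beta>" "\<beta> < 1" "\<beta> * (1/p' + \<eta>/\<zeta>') > 1" "\<beta> * (1/p' + \<eta>/p') > 1"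
    using exists_exponent_below_one[OF exps(3,4)] by blast
  have "bounded (z ` {S..T})"
    using \<zeta>(3) unfolding pvar_path_def by (intro compact_imp_bounded compact_continuous_image) auto
  then obtain M where M: "\<forall>x\<in>z ` {S..T}. norm x \<le> M" unfolding bounded_iff by blast
  define R where "R = max M 0"
  have "norm (z s) \<le> M" if "S \<le> s" "s \<le> T" for s using M that by auto
  then have R: "0 \<le> R" "\<And>s. S \<le> s \<Longrightarrow> s \<le> T \<Longrightarrow> norm (z s) \<le> R"
    unfolding R_def by (auto simp: le_max_iff_disj)
  obtain K where K: "K > 0" "R \<le> K"
    "\<And>s u x. 0 \<le> s \<Longrightarrow> s \<le> u \<Longrightarrow> u \<le> 1 \<Longrightarrow> norm x \<le> R \<Longrightarrow> norm (\<Psi> s u x) \<le> K"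
    using semiflow_bounded[OF sf _ \<beta>(1) R(1)] hol \<beta> by blast
  obtain N where N: "\<forall>s u. 0 \<le> s \<and> s \<le> u \<and> u \<le> 1 \<longrightarrow>
      (\<forall>x\<in>cball 0 K. \<forall>x'\<in>cball 0 K. norm (\<Psi> s u x - \<Psi> s u x') \<le> N * norm (x - x') powr \<beta>)"
    using hol \<beta> unfolding semiflow_loc_holder_def by blast
  have pA: "finite_pvar (holder_dist K \<eta>) p' 0 1 A" "vanishes_near_diagonal (pvariation (holder_dist K \<eta>) p' A) 0 1"
    using pvar_field_larger_exponent[OF A K(1) \<eta>(1) _ exps(1)] p by auto
  have pz: "finite_pvar dist \<zeta>' S T z" "vanishes_near_diagonal (pvariation dist \<zeta>' z) S T"
    using pvar_path_larger_exponent[OF \<zeta>(3) _ exps(2)] \<zeta>(1) t by auto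
  have "z t = \<Psi> S t (z S)"
  proof (rule nyi_solution_eq_semiflow[OF \<eta> sf _ _ _ _ exps(1) _ \<beta>(3,4) \<beta>(1,2) K(1)])
    show "finite_pvar (holder_dist K \<eta>) p' S t A" "finite_pvar dist \<zeta>' S t z"
      using finite_pvar_subinterval[OF pA(1)] finite_pvar_subinterval[OF pz(1)] ST t by auto
    show "vanishes_near_diagonal (pvariation (holder_dist K \<eta>) p' A) S t"
      "vanishes_near_diagonal (pvariation dist \<zeta>' z) S t"
      using vanishes_near_diagonal_subinterval[OF pA(2)] vanishes_near_diagonal_subinterval[OF pz(2)] ST t by auto
    show "norm (\<Psi> s t x - \<Psi> s t x') \<le> N * norm (x - x') powr \<beta>"
      if "S \<le> s" "s \<le> t" "x \<in> cball 0 K" "x' \<in> cball 0 K" for s x x'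
      using N that ST t by auto
    show "z s \<in> cball 0 K \<and> \<Psi> s u (z s) \<in> cball 0 K" if "S \<le> s" "s \<le> u" "u \<le> t" for s u
      using R(2)[of s] K(2) K(3)[of s u "z s"] that ST t by auto
  qed (use A ST t \<zeta> exps p solz zS in \<open>auto simp: pvar_field_def\<close>)
  then show ?thesis using zS by simp
qed

lemma semiflow_is_nyi_solution:
  assumes sf: "is_semiflow p A \<Psi>" and p: "1 \<le> p" "(1 + \<eta>) / p > 1" and ST: "0 \<le> S" "S \<le> T" "T \<le> 1"
  shows "is_nyi_solution p \<eta> A S T y (\<lambda>t. \<Psi> S t y)"
  unfolding is_nyi_solution_def
proof (intro exI conjI)
  have path: "pvar_path p S 1 (\<lambda>t. \<Psi> S t y)"
    and sol: "\<forall>t\<in>{S..1}. has_nyi A (\<lambda>t. \<Psi> S t y) S t (\<Psi> S t y - y)"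
    using sf ST unfolding is_semiflow_def by auto
  show "pvar_path p S T (\<lambda>t. \<Psi> S t y)"
    using path finite_pvar_subinterval[of dist p S 1 _ S T] ST unfolding pvar_path_def
    by (auto intro: continuous_on_subset)
  show "\<forall>t\<in>{S..T}. has_nyi A (\<lambda>t. \<Psi> S t y) S t (\<Psi> S t y - y)" using sol ST by auto
  show "1/p + \<eta>/p > 1" using p(2) by (simp add: add_divide_distrib)
qed (use p in simp)

theorem lemma5p8:
  fixes A :: "real \<Rightarrow> 'a::euclidean_space \<Rightarrow> 'a"
    and \<Psi> :: "real \<Rightarrow> real \<Rightarrow> 'a \<Rightarrow> 'a"
    and \<eta> p :: real
  assumes "0 < \<eta>" "\<eta> \<le> 1" "1 \<le> p" "p < 2" "(1 + \<eta>) / p > 1"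
    and "pvar_field p \<eta> A"
    and "is_semiflow p A \<Psi>"
    and "\<forall>\<beta>. 0 < \<beta> \<and> \<beta> < 1 \<longrightarrow> semiflow_loc_holder \<beta> \<Psi>"
  shows "\<forall>S T y. 0 \<le> S \<and> S \<le> T \<and> T \<le> 1 \<longrightarrow>
           is_nyi_solution p \<eta> A S T y (\<lambda>t. \<Psi> S t y) \<and>
           (\<forall>z. is_nyi_solution p \<eta> A S T y z \<longrightarrow> (\<forall>t\<in>{S..T}. z t = \<Psi> S t y))"
  using semiflow_is_nyi_solution[OF assms(7,3,5)] nyi_solution_unique[OF assms(1,2,3,5,6,7,8)] by auto

end
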